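(* Let $I$ be a finite set. The space $\mathcal{P}(\mathbf{k}\mathbf{HG})[I]$ of primitive elements of $\mathbf{k}\mathbf{HG}[I]$ has a basis consisting of the elements \[\omega_{\mathcal{G}}=\sum_{\mathcal{G}\le\mathcal{H}}\mu(\mathcal{G},\mathcal{H})\,\mathcal{H}\] for hypergraphs $\mathcal{G}$ on $I$ whose complement is connected. Further, the subspace of primitives of the Hopf algebra of hypergraphs $\mathcal{F}(\mathbf{k}\mathbf{HG})$ has a basis given by the elements $[\omega_{\mathcal{G}}]=\sum_{\mathcal{G}\le\mathcal{H}}\mu(\mathcal{G},\mathcal{H})[\mathcal{H}]$ for hypergraphs $\mathcal{G}$ whose complement is connected.
   Context: $\mathbf{k}$ is a field of characteristic $0$. A hypergraph on a finite vertex set $I$ is $\mathcal{G}=(I,E)$ with $E$ a set of subsets of $I$ of size at least $2$. $\mathbf{HG}[I]$ is the set of hypergraphs on $I$, ordered by inclusion of hyperedge sets; $\mu$ is its Möbius function; $\mathbf{k}\mathbf{HG}[I]$ is the vector space with basis $\mathbf{HG}[I]$. Multiplication: for $\mathcal{G}_1$ on $S$, $\mathcal{G}_2$ on $T$ disjoint, $m_{S,T}(\mathcal{G}_1,\mathcal{G}_2)=(S\sqcup T,E(\mathcal{G}_1)\cup E(\mathcal{G}_2))$ (disjoint union). Comultiplication: $\Delta_{S,T}(\mathcal{G})=\mathcal{G}|S\otimes\mathcal{G}|T$ where $\mathcal{G}|S=(S,\{U\in E(\mathcal{G}):U\subseteq S\})$. An element $p\in\mathbf{k}\mathbf{HG}[I]$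 is primitive if $\Delta_{S,T}(p)=0$ for all $I=S\sqcup T$ with $S,T$ nonempty. The complement of $\mathcal{G}=(I,E)$ is $\mathcal{G}^c=(I,\{U\subseteq I:|U|\ge2,\ U\notin E\})$. A hypergraph is connected if it is not the disjoint union $m_{S,T}(\mathcal{G}_1,\mathcal{G}_2)$ of hypergraphs on nonempty vertex sets $S,T$. The Fock functor gives the Hopf algebra $\mathcal{F}(\mathbf{k}\mathbf{HG})=\bigoplus_n\mathbf{k}\mathbf{HG}[\{1,\dots,n\}]_{S_n}$ (coinvariants under relabelling), $[\mathcal{H}]$ denoting the class of $\mathcal{H}$, with product $[\mathcal{G}_1][\mathcal{G}_2]=[m(\mathcal{G}_1,\mathcal{G}_2)]$ and coproduct $\Delta([\mathcal{G}])=\sum_{S\sqcup T=\{1,\dots,n\}}[\mathcal{G}|S]\otimes[\mathcal{G}|T]$; $h$ is primitive there if $\Delta(h)=h\otimes1+1\otimes h$. In $[\omega_{\mathcal{G}}]$ the sum runs over $\mathcal{H}\in\mathbf{HG}[\{1,\dots,n\}]$, not over classes. *)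

theory Defs
  imports Complex_Main "HOL-Library.Function_Algebras"
begin

text \<open>A hypergraph on the vertex set I is identified with its set of hyperedges E,
  a set of subsets of I of size at least 2.\<close>

definition hyperedges :: "'v set \<Rightarrow> 'v set set" where
  "hyperedges I = {U. U \<subseteq> I \<and> 2 \<le> card U}"

definition HG :: "'v set \<Rightarrow> 'v set set set" where
  "HG I = Pow (hyperedges I)"

definition hg_restrict :: "'v set set \<Rightarrow> 'v set \<Rightarrow> 'v set set" where
  "hg_restrict E S = {U \<in> E. U \<subseteq> S}"

definition hg_compl :: "'v set \<Rightarrow> 'v set set \<Rightarrow> 'v set set" where
  "hg_compl I E = hyperedges I - E"

definition hg_connected :: "'v set \<Rightarrow> 'v set set \<Rightarrow> bool" where
  "hg_connected I E \<longleftrightarrow> \<not> (\<exists>S T E1 E2. S \<noteq> {} \<and> T \<noteq> {} \<and> S \<inter> T = {} \<and> S \<union> T = I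
       \<and> E1 \<in> HG S \<and> E2 \<in> HG T \<and> E = E1 \<union> E2)"

definition is_mobius :: "'a set set \<Rightarrow> ('a set \<Rightarrow> 'a set \<Rightarrow> 'k::comm_ring_1) \<Rightarrow> bool" where
  "is_mobius P m \<longleftrightarrow>
     (\<forall>x\<in>P. m x x = 1) \<and>
     (\<forall>x\<in>P. \<forall>y\<in>P. x \<subset> y \<longrightarrow> m x y = - (\<Sum>z\<in>{z\<in>P. x \<subseteq> z \<and> z \<subset> y}. m x z)) \<and>
     (\<forall>x y. \<not> (x \<in> P \<and> y \<in> P \<and> x \<subseteq> y) \<longrightarrow> m x y = 0)"

definition mobius :: "'a set set \<Rightarrow> 'a set \<Rightarrow> 'a set \<Rightarrow> 'k::comm_ring_1" where
  "mobius P = (THE m. is_mobius P m)"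

text \<open>Vectors are coefficient functions on hypergraphs; kHG[I] consists of those
  supported on HG[I] (a finite set, since I is finite).\<close>

abbreviation fscale :: "'k::field \<Rightarrow> ('x \<Rightarrow> 'k) \<Rightarrow> ('x \<Rightarrow> 'k)" where
  "fscale c f \<equiv> (\<lambda>x. c * f x)"

definition kHG :: "'v set \<Rightarrow> ('v set set \<Rightarrow> 'k::field) set" where
  "kHG I = {v. \<forall>H. v H \<noteq> 0 \<longrightarrow> H \<in> HG I}"

text \<open>The component Delta_{S,T}(v) in kHG[S] (x) kHG[T], written in the basis
  HG[S] x HG[T] of the tensor product: coefficient of G1 (x) G2.\<close>
definition coprod_ST :: "'v set \<Rightarrow> 'v set \<Rightarrow> 'v set \<Rightarrow> ('v set set \<Rightarrow> 'k::field)
     \<Rightarrow> ('v set set \<times> 'v set set \<Rightarrow> 'k)" where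
  "coprod_ST I S T v = (\<lambda>(G1, G2).
      \<Sum>H\<in>{H \<in> HG I. hg_restrict H S = G1 \<and> hg_restrict H T = G2}. v H)"

definition hg_primitive :: "'v set \<Rightarrow> ('v set set \<Rightarrow> 'k::field) \<Rightarrow> bool" where
  "hg_primitive I p \<longleftrightarrow> p \<in> kHG I \<and>
     (\<forall>S T. S \<union> T = I \<and> S \<inter> T = {} \<and> S \<noteq> {} \<and> T \<noteq> {} \<longrightarrow> coprod_ST I S T p = (\<lambda>_. 0))"

definition omega :: "'v set \<Rightarrow> 'v set set \<Rightarrow> ('v set set \<Rightarrow> 'k::field)" where
  "omega I G = (\<lambda>H. if H \<in> HG I \<and> G \<subseteq> H then mobius (HG I) G H else 0)"

text \<open>Basis of kHG[{1..n}]_{S_n}: isomorphism classes.\<close>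

type_synonym hgclass = "nat \<times> nat set set set"

definition cl_of :: "nat set \<Rightarrow> nat set set \<Rightarrow> hgclass" where
  "cl_of S E = (card S, {E'. \<exists>f. bij_betw f S {1..card S} \<and> E' = (image f) ` E})"

definition fock_classes :: "hgclass set" where
  "fock_classes = {cl_of {1..n} E | n E. E \<in> HG {1..n}}"

text \<open>F(kHG): finitely supported coefficient functions on classes (direct sum over n).\<close>
definition fock_space :: "(hgclass \<Rightarrow> 'k::field) set" where
  "fock_space = {h. finite {c. h c \<noteq> 0} \<and> (\<forall>c. h c \<noteq> 0 \<longrightarrow> c \<in> fock_classes)}"

text \<open>The canonical projection kHG[{1..n}] -> kHG[{1..n}]_{S_n}, v |-> [v].\<close>
definition cls :: "nat \<Rightarrow> (nat set set \<Rightarrow> 'k::field) \<Rightarrow> (hgclass \<Rightarrow> 'k)" where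
  "cls n v = (\<lambda>c. if c \<in> fock_classes \<and> fst c = n then (\<Sum>H\<in>snd c. v H) else 0)"

definition fock_rep :: "hgclass \<Rightarrow> nat set set" where
  "fock_rep c = (SOME G. G \<in> HG {1..fst c} \<and> cl_of {1..fst c} G = c)"

text \<open>Coproduct Delta([G]) = sum over S disjoint-union T = {1..n} of [G|S] (x) [G|T],
  extended linearly; elements of F (x) F are written in the basis of pairs of classes.\<close>
definition fock_delta :: "(hgclass \<Rightarrow> 'k::field) \<Rightarrow> (hgclass \<times> hgclass \<Rightarrow> 'k)" where
  "fock_delta h = (\<lambda>(c1, c2). \<Sum>c\<in>{c \<in> fock_classes. h c \<noteq> 0}.
      h c * of_nat (card {S. S \<subseteq> {1..fst c}
          \<and> cl_of S (hg_restrict (fock_rep c) S) = c1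
          \<and> cl_of ({1..fst c} - S) (hg_restrict (fock_rep c) ({1..fst c} - S)) = c2}))"

definition fock_one :: "hgclass \<Rightarrow> 'k::field" where
  "fock_one = (\<lambda>c. if c = cl_of {} {} then 1 else 0)"

definition fock_primitive :: "(hgclass \<Rightarrow> 'k::field) \<Rightarrow> bool" where
  "fock_primitive h \<longleftrightarrow> h \<in> fock_space \<and>
     fock_delta h = (\<lambda>(c1, c2). h c1 * fock_one c2 + fock_one c1 * h c2)"

end

theory Submission
  imports Defs
begin

text \<open>
  In the Boolean lattice of hyperedge sets the Moebius function is (-1)^|H - G|, so the omega G form
  the basis of kHG[I] dual to the functionals zeta K v = (sum of v H over all H contained in K).
  If the complement of G is connected, every splitting I = S + T is crossed by a non-edge e of G,
  and adding or removing e is a sign-reversing involution on each fibre of Delta_{S,T}; hence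
  omega G is primitive. If the complement of G is disconnected along S + T, every hyperedge crossing
  S and T lies in G, so Pow G is a union of fibres of Delta_{S,T} and zeta G vanishes on primitives.
  Expanding a primitive in the basis omega therefore only uses G with connected complement.

  In F(kHG) a primitive h has no degree 0 part, and its degree n part is [w] for the relabelling
  invariant w that spreads h evenly over each isomorphism class. Every coefficient of Delta_{S,T} w
  occurs a positive number of times in a coefficient of Delta h, so w is primitive (char k = 0)
  and [w] lies in the span of the [omega G]. These are independent by triangularity: [omega G]
  vanishes at the class of G' unless |G'| >= |G|, and for |G'| = |G| it is 1 exactly at the class of G.
\<close>

section \<open>The Moebius function of a Boolean lattice\<close>

lemma sum_neg_one_power_interval:
  assumes "finite K" "G \<subseteq> K"
  shows "(\<Sum>H | G \<subseteq> H \<and> H \<subseteq> K. (-1::'k::comm_ring_1) ^ card (H - G)) = (if G = K then 1 else 0)"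
proof (cases "G = K")
  case True
  then have "{H. G \<subseteq> H \<and> H \<subseteq> K} = {K}" by blast
  with True show ?thesis by simp
next
  case False
  have sign: "(-1::'k) ^ card (H - G) = (-1) ^ card G * (-1) ^ card H"
    if "G \<subseteq> H" "H \<subseteq> K" for H
  proof -
    have "finite H" using that assms(1) finite_subset by blast
    then have "card (H - G) = card H - card G" "card G \<le> card H"
      using that(1) by (simp_all add: card_Diff_subset finite_subset card_mono)
    then show ?thesis
      by (metis add.commute neg_one_power_add_eq_neg_one_power_diff power_add)
  qed
  have "G \<subset> K" using False assms(2) by blast
  have filter: "{H \<in> {H. G \<subseteq> H \<and> H \<subseteq> K}. P H} = {H. H \<subseteq> K \<and> G \<subseteq> H \<and> P H}" for P
    by blast
  have "(\<Sum>H | G \<subseteq> H \<and> H \<subseteq> K. (-1::'k) ^ card H) = 0"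
    using card_subsupersets_even_odd[OF assms(1) \<open>G \<subset> K\<close>] assms(1)
    by (intro sum_alternating_cancels) (simp_all only: filter, auto intro: rev_finite_subset)
  have "(\<Sum>H | G \<subseteq> H \<and> H \<subseteq> K. (-1::'k) ^ card (H - G))
      = (\<Sum>H | G \<subseteq> H \<and> H \<subseteq> K. (-1) ^ card G * (-1) ^ card H)"
    using sign by (intro sum.cong) auto
  also have "\<dots> = (-1) ^ card G * (\<Sum>H | G \<subseteq> H \<and> H \<subseteq> K. (-1) ^ card H)"
    by (simp add: sum_distrib_left)
  finally show ?thesis
    using False \<open>(\<Sum>H | G \<subseteq> H \<and> H \<subseteq> K. (-1::'k) ^ card H) = 0\<close> by simp
qed

definition boolean_mobius :: "'a set \<Rightarrow> 'a set \<Rightarrow> 'a set \<Rightarrow> 'k::comm_ring_1" where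
  "boolean_mobius X x y = (if x \<subseteq> y \<and> y \<subseteq> X then (-1) ^ card (y - x) else 0)"

lemma is_mobius_boolean_mobius:
  assumes "finite X"
  shows "is_mobius (Pow X) (boolean_mobius X :: 'a set \<Rightarrow> 'a set \<Rightarrow> 'k::comm_ring_1)"
  unfolding is_mobius_def
proof (intro conjI ballI impI allI)
  fix x y assume xy: "x \<in> Pow X" "y \<in> Pow X" "x \<subset> y"
  have "finite y" using xy(2) assms finite_subset by blast
  then have fin: "finite {z. x \<subseteq> z \<and> z \<subseteq> y}" by (rule rev_finite_subset[OF finite_Pow_iff[THEN iffD2]]) auto
  have "x \<subseteq> y" "x \<noteq> y" using xy(3) by auto
  then have "(0::'k) = (\<Sum>z | x \<subseteq> z \<and> z \<subseteq> y. (-1) ^ card (z - x))"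
    using sum_neg_one_power_interval[OF \<open>finite y\<close> \<open>x \<subseteq> y\<close>] by simp
  also have "\<dots> = (-1) ^ card (y - x) + (\<Sum>z\<in>{z. x \<subseteq> z \<and> z \<subseteq> y} - {y}. (-1) ^ card (z - x))"
    using xy(3) by (subst sum.remove[OF fin, of y]) auto
  also have "{z. x \<subseteq> z \<and> z \<subseteq> y} - {y} = {z \<in> Pow X. x \<subseteq> z \<and> z \<subset> y}"
    using xy by blast
  also have "(\<Sum>z\<in>{z \<in> Pow X. x \<subseteq> z \<and> z \<subset> y}. (-1::'k) ^ card (z - x))
      = (\<Sum>z\<in>{z \<in> Pow X. x \<subseteq> z \<and> z \<subset> y}. boolean_mobius X x z)"
    by (intro sum.cong) (auto simp: boolean_mobius_def)
  finally show "boolean_mobius X x y = - (\<Sum>z | z \<in> Pow X \<and> x \<subseteq> z \<and> z \<subset> y. (boolean_mobius X x z :: 'k))"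
    using xy by (simp add: boolean_mobius_def add_eq_0_iff)
qed (auto simp: boolean_mobius_def)

lemma mobius_eqI:
  fixes m :: "'a set \<Rightarrow> 'a set \<Rightarrow> 'k::comm_ring_1"
  assumes fin: "\<And>y. y \<in> P \<Longrightarrow> finite y" and m: "is_mobius P m"
  shows "mobius P = m"
  unfolding mobius_def
proof (rule the_equality)
  show "is_mobius P m" by (rule m)
next
  fix m' :: "'a set \<Rightarrow> 'a set \<Rightarrow> 'k"
  assume m': "is_mobius P m'"
  have "m' x y = m x y" for x y
  proof (induction y arbitrary: x rule: measure_induct_rule[where f=card])
    case (less y)
    show ?case
    proof (cases "x \<in> P \<and> y \<in> P \<and> x \<subset> y")
      case True
      have "card z < card y" if "z \<subset> y" for z
        using fin True that by (simp add: psubset_card_mono)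
      then have "sum (m' x) {z \<in> P. x \<subseteq> z \<and> z \<subset> y} = sum (m x) {z \<in> P. x \<subseteq> z \<and> z \<subset> y}"
        using less by (intro sum.cong) auto
      then show ?thesis
        using True m m' unfolding is_mobius_def by simp
    next
      case False
      then show ?thesis
        using m m' unfolding is_mobius_def by (metis subset_iff_psubset_eq)
    qed
  qed
  then show "m' = m" by blast
qed

lemma mobius_Pow:
  "finite X \<Longrightarrow> mobius (Pow X) = (boolean_mobius X :: 'a set \<Rightarrow> 'a set \<Rightarrow> 'k::comm_ring_1)"
  by (rule mobius_eqI[OF _ is_mobius_boolean_mobius]) (auto intro: finite_subset)

section \<open>Primitive elements of kHG[I]\<close>

lemma sum_apply: "(\<Sum>a\<in>A. f a) x = (\<Sum>a\<in>A. f a x)"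
  by (induction A rule: infinite_finite_induct) auto

lemma module_fscale: "module (fscale :: 'k::field \<Rightarrow> ('x \<Rightarrow> 'k) \<Rightarrow> 'x \<Rightarrow> 'k)"
  by unfold_locales (auto simp: algebra_simps)

lemma independent_if_triangular:
  fixes f :: "'a \<Rightarrow> 'x \<Rightarrow> 'k::field" and ev :: "'a \<Rightarrow> ('x \<Rightarrow> 'k) \<Rightarrow> 'k" and rk :: "'a \<Rightarrow> nat"
  assumes ev_lincomb: "\<And>a t u. ev a (\<Sum>v\<in>t. fscale (u v) v) = (\<Sum>v\<in>t. u v * ev a v)"
    and ev_diag: "\<And>a. a \<in> A \<Longrightarrow> ev a (f a) \<noteq> 0"
    and ev_upper: "\<And>a b. a \<in> A \<Longrightarrow> b \<in> A \<Longrightarrow> rk a \<le> rk b \<Longrightarrow> f b \<noteq> f a \<Longrightarrow> ev a (f b) = 0"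
  shows "\<not> module.dependent fscale (f ` A)"
  unfolding module.dependent_explicit[OF module_fscale]
proof clarify
  fix t u v0
  assume t: "finite t" "t \<subseteq> f ` A" and sum0: "(\<Sum>v\<in>t. fscale (u v) v) = 0"
    and v0: "v0 \<in> t" "u v0 \<noteq> 0"
  define idx where "idx v = inv_into A f v" for v
  have idx: "idx v \<in> A" "f (idx v) = v" if "v \<in> t" for v
    using that t(2) unfolding idx_def by (auto intro: inv_into_into f_inv_into_f)
  \<comment> \<open>The functional of a term of minimal rank kills all other terms.\<close>
  obtain v1 where v1: "v1 \<in> t" "u v1 \<noteq> 0"
    and v1_min: "\<And>v. v \<in> t \<Longrightarrow> u v \<noteq> 0 \<Longrightarrow> rk (idx v1) \<le> rk (idx v)"
    using ex_has_least_nat[of "\<lambda>v. v \<in> t \<and> u v \<noteq> 0" v0 "\<lambda>v. rk (idx v)"] v0 by blast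
  have "0 = ev (idx v1) (\<Sum>v\<in>t. fscale (u v) v)"
    using ev_lincomb[where t = "{}"] sum0 by simp
  also have "\<dots> = (\<Sum>v\<in>t. if v = v1 then u v1 * ev (idx v1) v1 else 0)"
    unfolding ev_lincomb
  proof (intro sum.cong refl)
    fix v assume "v \<in> t"
    show "u v * ev (idx v1) v = (if v = v1 then u v1 * ev (idx v1) v1 else 0)"
    proof (cases "v = v1 \<or> u v = 0")
      case False
      then have "ev (idx v1) (f (idx v)) = 0"
        using ev_upper[of "idx v1" "idx v"] idx \<open>v \<in> t\<close> v1 v1_min by auto
      then show ?thesis using False idx(2)[OF \<open>v \<in> t\<close>] by simp
    qed auto
  qed
  also have "\<dots> = u v1 * ev (idx v1) (f (idx v1))"
    using t(1) v1(1) idx(2)[OF v1(1)] by simp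
  finally show False
    using v1 ev_diag[OF idx(1)[OF v1(1)]] by simp
qed

lemma finite_hyperedges: "finite I \<Longrightarrow> finite (hyperedges I)"
  unfolding hyperedges_def by (rule rev_finite_subset[of "Pow I"]) auto

lemma finite_HG: "finite I \<Longrightarrow> finite (HG I)"
  unfolding HG_def by (simp add: finite_hyperedges)

lemma HG_subset_Pow: "E \<in> HG S \<Longrightarrow> E \<subseteq> Pow S"
  unfolding HG_def hyperedges_def by auto

lemma HG_empty: "HG {} = {{}}"
  unfolding HG_def hyperedges_def by auto

lemma hg_restrict_in_HG: "H \<in> HG I \<Longrightarrow> hg_restrict H S \<in> HG S"
  unfolding hg_restrict_def HG_def hyperedges_def by auto

lemma omega_eq:
  assumes "finite I"
  shows "omega I G H = (if G \<subseteq> H \<and> H \<subseteq> hyperedges I then (-1::'k::field) ^ card (H - G) else 0)"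
  unfolding omega_def HG_def mobius_Pow[OF finite_hyperedges[OF assms]] boolean_mobius_def by auto

lemma omega_in_kHG: "omega I G \<in> kHG I"
  unfolding kHG_def omega_def by auto

definition zeta_transform :: "'a set \<Rightarrow> ('a set \<Rightarrow> 'k::comm_ring_1) \<Rightarrow> 'k" where
  "zeta_transform K v = (\<Sum>H\<in>Pow K. v H)"

lemma zeta_transform_lincomb:
  "zeta_transform K (\<Sum>w\<in>t. fscale (u w) w) = (\<Sum>w\<in>t. u w * zeta_transform K (w :: _ \<Rightarrow> 'k::field))"
  unfolding zeta_transform_def sum_apply by (simp add: sum_distrib_left sum.swap[of _ "Pow K"])

lemma zeta_transform_omega:
  assumes "finite I" "K \<subseteq> hyperedges I"
  shows "zeta_transform K (omega I G :: _ \<Rightarrow> 'k::field) = (if G = K then 1 else 0)"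
proof (cases "G \<subseteq> K")
  case True
  have "finite K" using assms finite_hyperedges finite_subset by blast
  have "{H \<in> Pow K. G \<subseteq> H \<and> H \<subseteq> hyperedges I} = {H. G \<subseteq> H \<and> H \<subseteq> K}"
    using assms(2) by blast
  then have "zeta_transform K (omega I G :: _ \<Rightarrow> 'k) = (\<Sum>H | G \<subseteq> H \<and> H \<subseteq> K. (-1) ^ card (H - G))"
    unfolding zeta_transform_def omega_eq[OF assms(1)] using \<open>finite K\<close>
    by (simp add: sum.inter_filter[symmetric])
  also have "\<dots> = (if G = K then 1 else 0)"
    by (rule sum_neg_one_power_interval[OF \<open>finite K\<close> True])
  finally show ?thesis .
next
  case False
  then have "\<not> G \<subseteq> H" if "H \<in> Pow K" for H
    using that by blast
  then show ?thesis
    using False unfolding zeta_transform_def omega_eq[OF assms(1)] by (auto intro!: sum.neutral)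
qed

lemma omega_expansion:
  assumes "finite I" "v \<in> kHG I"
  shows "v = (\<Sum>G\<in>HG I. fscale (zeta_transform G v) (omega I G :: _ \<Rightarrow> 'k::field))"
proof
  fix K
  show "v K = (\<Sum>G\<in>HG I. fscale (zeta_transform G v) (omega I G)) K"
  proof (cases "K \<in> HG I")
    case True
    then have "finite K" "Pow K \<subseteq> HG I"
      using finite_hyperedges[OF assms(1)] finite_subset unfolding HG_def by auto
    have "v K = (\<Sum>G\<in>Pow K. (-1) ^ (card K - card G) * zeta_transform G v)"
      by (rule inclusion_exclusion_mobius[OF _ \<open>finite K\<close>]) (simp add: zeta_transform_def)
    also have "\<dots> = (\<Sum>G\<in>Pow K. zeta_transform G v * omega I G K)"
      using True \<open>finite K\<close> unfolding omega_eq[OF assms(1)] HG_def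
      by (intro sum.cong) (auto simp: card_Diff_subset finite_subset)
    also have "\<dots> = (\<Sum>G\<in>HG I. zeta_transform G v * omega I G K)"
      using \<open>Pow K \<subseteq> HG I\<close> finite_HG[OF assms(1)]
      by (intro sum.mono_neutral_left) (auto simp: omega_eq[OF assms(1)])
    finally show ?thesis by (simp add: sum_apply)
  next
    case False
    then show ?thesis
      using assms(2) unfolding kHG_def by (auto simp: sum_apply omega_def)
  qed
qed

lemma hg_connected_compl_iff:
  "hg_connected I (hg_compl I G) \<longleftrightarrow>
     (\<forall>S T. S \<union> T = I \<and> S \<inter> T = {} \<and> S \<noteq> {} \<and> T \<noteq> {} \<longrightarrow>
        (\<exists>e \<in> hyperedges I - G. \<not> e \<subseteq> S \<and> \<not> e \<subseteq> T))"
proof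
  assume conn: "hg_connected I (hg_compl I G)"
  show "\<forall>S T. S \<union> T = I \<and> S \<inter> T = {} \<and> S \<noteq> {} \<and> T \<noteq> {} \<longrightarrow>
          (\<exists>e \<in> hyperedges I - G. \<not> e \<subseteq> S \<and> \<not> e \<subseteq> T)"
  proof (intro allI impI, rule ccontr)
    fix S T
    assume ST: "S \<union> T = I \<and> S \<inter> T = {} \<and> S \<noteq> {} \<and> T \<noteq> {}"
      and no_cross: "\<not> (\<exists>e \<in> hyperedges I - G. \<not> e \<subseteq> S \<and> \<not> e \<subseteq> T)"
    define E1 where "E1 = {e \<in> hg_compl I G. e \<subseteq> S}"
    define E2 where "E2 = {e \<in> hg_compl I G. e \<subseteq> T}"
    have "hg_compl I G = E1 \<union> E2"
      using no_cross unfolding E1_def E2_def hg_compl_def by blast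
    moreover have "E1 \<in> HG S" "E2 \<in> HG T"
      unfolding E1_def E2_def hg_compl_def HG_def hyperedges_def by auto
    ultimately have "\<not> hg_connected I (hg_compl I G)"
      using ST unfolding hg_connected_def by blast
    then show False using conn by contradiction
  qed
next
  assume cross: "\<forall>S T. S \<union> T = I \<and> S \<inter> T = {} \<and> S \<noteq> {} \<and> T \<noteq> {} \<longrightarrow>
      (\<exists>e \<in> hyperedges I - G. \<not> e \<subseteq> S \<and> \<not> e \<subseteq> T)"
  show "hg_connected I (hg_compl I G)"
    unfolding hg_connected_def
  proof (intro notI, elim exE conjE)
    fix S T E1 E2
    assume "S \<noteq> {}" "T \<noteq> {}" "S \<inter> T = {}" "S \<union> T = I" "E1 \<in> HG S" "E2 \<in> HG T"
      and split: "hg_compl I G = E1 \<union> E2"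
    obtain e where e: "e \<in> hyperedges I - G" "\<not> e \<subseteq> S" "\<not> e \<subseteq> T"
      using cross[rule_format, of S T] \<open>S \<noteq> {}\<close> \<open>T \<noteq> {}\<close> \<open>S \<inter> T = {}\<close> \<open>S \<union> T = I\<close> by blast
    have "e \<in> E1 \<union> E2"
      using e(1) split unfolding hg_compl_def by simp
    then show False
      using e(2,3) HG_subset_Pow[OF \<open>E1 \<in> HG S\<close>] HG_subset_Pow[OF \<open>E2 \<in> HG T\<close>] by blast
  qed
qed

lemma sum_toggle_eq_0:
  fixes f :: "'a set \<Rightarrow> 'b::ab_group_add"
  assumes "finite A"
    and closed: "\<And>H. H \<in> A \<Longrightarrow> insert e H \<in> A" "\<And>H. H \<in> A \<Longrightarrow> H - {e} \<in> A"
    and flip: "\<And>H. H \<in> A \<Longrightarrow> e \<notin> H \<Longrightarrow> f (insert e H) = - f H"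
  shows "sum f A = 0"
proof -
  have "sum f {H \<in> A. e \<in> H} = sum (f \<circ> insert e) {H \<in> A. e \<notin> H}"
  proof (rule sum.reindex_cong)
    show "inj_on (insert e) {H \<in> A. e \<notin> H}"
      by (rule inj_onI) (metis Diff_insert_absorb mem_Collect_eq)
    show "{H \<in> A. e \<in> H} = insert e ` {H \<in> A. e \<notin> H}"
    proof (intro equalityI subsetI)
      fix H assume "H \<in> {H \<in> A. e \<in> H}"
      then have "H = insert e (H - {e})" "H - {e} \<in> {H \<in> A. e \<notin> H}"
        using closed(2) by auto
      then show "H \<in> insert e ` {H \<in> A. e \<notin> H}" by (rule image_eqI)
    qed (use closed(1) in auto)
  qed simp
  also have "\<dots> = - sum f {H \<in> A. e \<notin> H}"
    using flip by (simp add: sum_negf[symmetric])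
  moreover have "sum f {H \<in> A. e \<in> H} + sum f {H \<in> A. e \<notin> H} = sum f A"
    by (rule sum_Un_eq) (use \<open>finite A\<close> in auto)
  ultimately show ?thesis by simp
qed

lemma hg_restrict_insert: "\<not> e \<subseteq> S \<Longrightarrow> hg_restrict (insert e H) S = hg_restrict H S"
  unfolding hg_restrict_def by auto

lemma hg_restrict_Diff_singleton: "\<not> e \<subseteq> S \<Longrightarrow> hg_restrict (H - {e}) S = hg_restrict H S"
  unfolding hg_restrict_def by auto

lemma coprod_ST_apply:
  "coprod_ST I S T v (G1, G2) = (\<Sum>H\<in>{H \<in> HG I. hg_restrict H S = G1 \<and> hg_restrict H T = G2}. v H)"
  unfolding coprod_ST_def by simp

lemma hg_primitiveI:
  assumes "p \<in> kHG I"
    and split: "\<And>S G1 G2. S \<subseteq> I \<Longrightarrow> S \<noteq> {} \<Longrightarrow> I - S \<noteq> {} \<Longrightarrow> G1 \<in> HG S \<Longrightarrow> G2 \<in> HG (I - S)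
       \<Longrightarrow> coprod_ST I S (I - S) p (G1, G2) = 0"
  shows "hg_primitive I p"
proof -
  have "coprod_ST I S T p (G1, G2) = 0"
    if "S \<union> T = I \<and> S \<inter> T = {} \<and> S \<noteq> {} \<and> T \<noteq> {}" for S T G1 G2
  proof (cases "G1 \<in> HG S \<and> G2 \<in> HG T")
    case True
    moreover have "T = I - S" "S \<subseteq> I" "S \<noteq> {}" "I - S \<noteq> {}"
      using that by auto
    ultimately show ?thesis
      using split by simp
  next
    case False
    then have "{H \<in> HG I. hg_restrict H S = G1 \<and> hg_restrict H T = G2} = {}"
      using hg_restrict_in_HG by blast
    then show ?thesis
      unfolding coprod_ST_apply by (simp only: sum.empty)
  qed
  then show ?thesis
    unfolding hg_primitive_def using assms(1) by (auto simp: fun_eq_iff)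
qed

lemma omega_primitive:
  assumes "finite I" "hg_connected I (hg_compl I G)"
  shows "hg_primitive I (omega I G :: _ \<Rightarrow> 'k::field)"
proof -
  have "coprod_ST I S T (omega I G :: _ \<Rightarrow> 'k) (G1, G2) = 0"
    if ST: "S \<union> T = I \<and> S \<inter> T = {} \<and> S \<noteq> {} \<and> T \<noteq> {}" for S T G1 G2
  proof -
    obtain e where e: "e \<in> hyperedges I" "e \<notin> G" "\<not> e \<subseteq> S" "\<not> e \<subseteq> T"
      using assms(2)[unfolded hg_connected_compl_iff, rule_format, OF ST] by blast
    let ?A = "{H \<in> HG I. hg_restrict H S = G1 \<and> hg_restrict H T = G2}"
    show ?thesis
      unfolding coprod_ST_apply
    proof (rule sum_toggle_eq_0)
      show "finite ?A"
        using finite_HG[OF assms(1)] by simp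
    next
      fix H assume "H \<in> ?A"
      then show "insert e H \<in> ?A" and "H - {e} \<in> ?A"
        using e unfolding HG_def by (simp_all add: hg_restrict_insert hg_restrict_Diff_singleton, blast+)
    next
      fix H assume H: "H \<in> ?A" "e \<notin> H"
      then have "H \<subseteq> hyperedges I" by (simp add: HG_def)
      then have "finite (H - G)"
        using finite_hyperedges[OF assms(1)] by (meson finite_Diff finite_subset)
      moreover have "insert e H - G = insert e (H - G)" "G \<subseteq> insert e H \<longleftrightarrow> G \<subseteq> H"
        using e(2) by blast+
      ultimately show "omega I G (insert e H) = - (omega I G H :: 'k)"
        using \<open>H \<subseteq> hyperedges I\<close> e(1) H(2) unfolding omega_eq[OF assms(1)] by simp
    qed
  qed
  then show ?thesis
    unfolding hg_primitive_def using omega_in_kHG by (auto simp: fun_eq_iff)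
qed

lemma not_hg_connected_complE:
  assumes "\<not> hg_connected I (hg_compl I G)"
  obtains S T where "S \<union> T = I \<and> S \<inter> T = {} \<and> S \<noteq> {} \<and> T \<noteq> {}"
    and "\<And>e. e \<in> hyperedges I \<Longrightarrow> \<not> e \<subseteq> S \<Longrightarrow> \<not> e \<subseteq> T \<Longrightarrow> e \<in> G"
proof -
  have "\<exists>S T. (S \<union> T = I \<and> S \<inter> T = {} \<and> S \<noteq> {} \<and> T \<noteq> {})
      \<and> \<not> (\<exists>e \<in> hyperedges I - G. \<not> e \<subseteq> S \<and> \<not> e \<subseteq> T)"
    using assms unfolding hg_connected_compl_iff by (simp only: not_all not_imp)
  then obtain S T where "(S \<union> T = I \<and> S \<inter> T = {} \<and> S \<noteq> {} \<and> T \<noteq> {})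
      \<and> \<not> (\<exists>e \<in> hyperedges I - G. \<not> e \<subseteq> S \<and> \<not> e \<subseteq> T)"
    by blast
  then show ?thesis
    using that[of S T] by blast
qed

lemma coprod_fibre_subset_Pow:
  assumes "H0 \<subseteq> G" and crossing: "\<And>e. e \<in> hyperedges I \<Longrightarrow> \<not> e \<subseteq> S \<Longrightarrow> \<not> e \<subseteq> T \<Longrightarrow> e \<in> G"
  shows "{H \<in> HG I. hg_restrict H S = hg_restrict H0 S \<and> hg_restrict H T = hg_restrict H0 T} \<subseteq> Pow G"
proof
  fix H assume H: "H \<in> {H \<in> HG I. hg_restrict H S = hg_restrict H0 S \<and> hg_restrict H T = hg_restrict H0 T}"
  have "e \<in> G" if "e \<in> H" for e
  proof (cases "e \<subseteq> S \<or> e \<subseteq> T")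
    case True
    then have "e \<in> hg_restrict H S \<or> e \<in> hg_restrict H T"
      using \<open>e \<in> H\<close> by (auto simp: hg_restrict_def)
    then have "e \<in> H0" using H by (auto simp: hg_restrict_def)
    then show ?thesis using \<open>H0 \<subseteq> G\<close> by blast
  next
    case False
    then show ?thesis using crossing H \<open>e \<in> H\<close> by (auto simp: HG_def)
  qed
  then show "H \<in> Pow G" by blast
qed

lemma zeta_transform_primitive_eq_0:
  assumes "finite I" "hg_primitive I p" "G \<subseteq> hyperedges I" "\<not> hg_connected I (hg_compl I G)"
  shows "zeta_transform G p = 0"
proof -
  obtain S T where ST: "S \<union> T = I \<and> S \<inter> T = {} \<and> S \<noteq> {} \<and> T \<noteq> {}"
    and crossing: "\<And>e. e \<in> hyperedges I \<Longrightarrow> \<not> e \<subseteq> S \<Longrightarrow> \<not> e \<subseteq> T \<Longrightarrow> e \<in> G"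
    using not_hg_connected_complE[OF assms(4)] by metis
  define r where "r H = (hg_restrict H S, hg_restrict H T)" for H
  \<comment> \<open>Pow G is a union of fibres of the coproduct, on each of which p sums to zero.\<close>
  have fibre: "{H \<in> Pow G. r H = r H0} = {H \<in> HG I. r H = r H0}" if "H0 \<subseteq> G" for H0
    using coprod_fibre_subset_Pow[where I = I and S = S and T = T, OF that crossing] assms(3)
    by (auto simp: r_def HG_def)
  have "finite (Pow G)"
    using assms(1,3) finite_hyperedges finite_subset by blast
  then have "zeta_transform G p = (\<Sum>y\<in>r ` Pow G. \<Sum>H\<in>{H \<in> Pow G. r H = y}. p H)"
    unfolding zeta_transform_def by (intro sum.group[symmetric]) auto
  also have "\<dots> = (\<Sum>y\<in>r ` Pow G. coprod_ST I S T p y)"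
    using fibre by (intro sum.cong) (auto simp: r_def coprod_ST_apply)
  also have "\<dots> = 0"
    using assms(2) ST unfolding hg_primitive_def by simp
  finally show ?thesis .
qed

lemma subspace_primitives: "module.subspace fscale {p. hg_primitive I (p :: _ \<Rightarrow> 'k::field)}"
proof (rule module.subspaceI[OF module_fscale])
  show "0 \<in> {p. hg_primitive I (p :: _ \<Rightarrow> 'k)}"
    by (auto simp: hg_primitive_def kHG_def coprod_ST_def)
next
  fix x y :: "_ \<Rightarrow> 'k" assume "x \<in> {p. hg_primitive I p}" "y \<in> {p. hg_primitive I p}"
  then show "x + y \<in> {p. hg_primitive I p}"
    by (simp add: hg_primitive_def kHG_def coprod_ST_def sum.distrib fun_eq_iff split: prod.splits)
       (metis add.right_neutral)
next
  fix c :: 'k and x :: "_ \<Rightarrow> 'k" assume "x \<in> {p. hg_primitive I p}"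
  then show "fscale c x \<in> {p. hg_primitive I p}"
    by (simp add: hg_primitive_def kHG_def coprod_ST_def sum_distrib_left[symmetric] fun_eq_iff
        split: prod.splits)
qed

lemma primitive_basis:
  fixes I :: "'v set"
  assumes "finite I"
  defines "C \<equiv> {G \<in> HG I. hg_connected I (hg_compl I G)}"
  shows "inj_on (omega I :: _ \<Rightarrow> _ \<Rightarrow> 'k::field) C"
    and "\<not> module.dependent fscale ((omega I :: _ \<Rightarrow> _ \<Rightarrow> 'k) ` C)"
    and "module.span fscale ((omega I :: _ \<Rightarrow> _ \<Rightarrow> 'k) ` C) = {p. hg_primitive I p}"
proof -
  have zeta_omega: "zeta_transform G (omega I G' :: _ \<Rightarrow> 'k) = (if G' = G then 1 else 0)"
    if "G \<in> HG I" for G G'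
    using zeta_transform_omega[OF assms(1), of G G'] that by (simp add: HG_def eq_commute)
  show "inj_on (omega I :: _ \<Rightarrow> _ \<Rightarrow> 'k) C"
    by (rule inj_onI) (metis zeta_omega C_def mem_Collect_eq one_neq_zero)
  show "\<not> module.dependent fscale ((omega I :: _ \<Rightarrow> _ \<Rightarrow> 'k) ` C)"
    by (rule independent_if_triangular[where ev = zeta_transform and rk = "\<lambda>_. 0"])
      (auto simp: zeta_transform_lincomb zeta_omega C_def)
  show "module.span fscale ((omega I :: _ \<Rightarrow> _ \<Rightarrow> 'k) ` C) = {p. hg_primitive I p}"
  proof
    show "module.span fscale ((omega I :: _ \<Rightarrow> _ \<Rightarrow> 'k) ` C) \<subseteq> {p. hg_primitive I p}"
      using omega_primitive[OF assms(1)]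
      by (intro module.span_minimal[OF module_fscale _ subspace_primitives]) (auto simp: C_def)
  next
    show "{p. hg_primitive I p} \<subseteq> module.span fscale ((omega I :: _ \<Rightarrow> _ \<Rightarrow> 'k) ` C)"
    proof
      fix p :: "_ \<Rightarrow> 'k" assume "p \<in> {p. hg_primitive I p}"
      then have p: "hg_primitive I p" "p \<in> kHG I" by (simp_all add: hg_primitive_def)
      have "p = (\<Sum>G\<in>HG I. fscale (zeta_transform G p) (omega I G))"
        by (rule omega_expansion[OF assms(1) p(2)])
      also have "\<dots> = (\<Sum>G\<in>C. fscale (zeta_transform G p) (omega I G))"
        using zeta_transform_primitive_eq_0[OF assms(1) p(1)] finite_HG[OF assms(1)]
        by (intro sum.mono_neutral_right) (auto simp: C_def HG_def fun_eq_iff)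
      also have "\<dots> \<in> module.span fscale ((omega I :: _ \<Rightarrow> _ \<Rightarrow> 'k) ` C)"
        by (intro module.span_sum[OF module_fscale] module.span_scale[OF module_fscale]
            module.span_base[OF module_fscale]) auto
      finally show "p \<in> module.span fscale ((omega I :: _ \<Rightarrow> _ \<Rightarrow> 'k) ` C)" .
    qed
  qed
qed

abbreviation relabel :: "('a \<Rightarrow> 'b) \<Rightarrow> 'a set set \<Rightarrow> 'b set set" where
  "relabel f E \<equiv> image f ` E"

lemma relabel_comp: "relabel (g \<circ> f) E = relabel g (relabel f E)"
  by (simp add: image_comp image_image)

lemma relabel_inv_into:
  assumes "E \<subseteq> Pow S" "inj_on f S"
  shows "relabel (inv_into S f) (relabel f E) = E"
proof -
  have "inv_into S f ` f ` e = e" if "e \<in> E" for e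
    using that assms by (intro inv_into_image_cancel) auto
  then show ?thesis by (simp add: image_image)
qed

lemma relabel_cong:
  assumes "E \<subseteq> Pow S" "\<And>x. x \<in> S \<Longrightarrow> f x = g x"
  shows "relabel f E = relabel g E"
  using assms by (intro image_cong refl) (auto intro: image_cong)

lemma inj_on_image_subset_iff:
  assumes "inj_on f C" "A \<subseteq> C" "B \<subseteq> C"
  shows "f ` A \<subseteq> f ` B \<longleftrightarrow> A \<subseteq> B"
proof
  assume sub: "f ` A \<subseteq> f ` B"
  show "A \<subseteq> B"
  proof
    fix x assume "x \<in> A"
    then have "f x \<in> f ` B" using sub by blast
    then show "x \<in> B"
      using inj_on_image_mem_iff[OF assms(1) _ assms(3)] assms(2) \<open>x \<in> A\<close> by blast
  qed
qed blast

lemma bij_betw_filter: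
  assumes "bij_betw \<phi> U V" "\<And>x. x \<in> U \<Longrightarrow> P (\<phi> x) \<longleftrightarrow> Q x"
  shows "bij_betw \<phi> {x \<in> U. Q x} {y \<in> V. P y}"
  using assms unfolding bij_betw_def by (auto intro: inj_on_subset)

lemma bij_betw_relabel_HG:
  assumes "bij_betw f S S'"
  shows "bij_betw (relabel f) (HG S) (HG S')"
proof -
  have "card (f ` U) = card U" if "U \<subseteq> S" for U
    using assms that by (meson bij_betw_def card_image inj_on_subset)
  then have "bij_betw (image f) {U \<in> Pow S. 2 \<le> card U} {U \<in> Pow S'. 2 \<le> card U}"
    by (intro bij_betw_filter[OF bij_betw_Pow[OF assms]]) auto
  then have "bij_betw (image f) (hyperedges S) (hyperedges S')"
    unfolding hyperedges_def by (simp add: Pow_def)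
  then show ?thesis
    unfolding HG_def by (rule bij_betw_Pow)
qed

lemma relabel_in_HG: "bij_betw f S S' \<Longrightarrow> E \<in> HG S \<Longrightarrow> relabel f E \<in> HG S'"
  using bij_betw_relabel_HG bij_betwE by blast

lemma hg_restrict_relabel:
  assumes "inj_on \<sigma> A" "H \<subseteq> Pow A" "S \<subseteq> A"
  shows "hg_restrict (relabel \<sigma> H) (\<sigma> ` S) = relabel \<sigma> (hg_restrict H S)"
proof -
  have "\<sigma> ` e \<subseteq> \<sigma> ` S \<longleftrightarrow> e \<subseteq> S" if "e \<in> H" for e
    using inj_on_image_subset_iff[OF assms(1)] that assms(2,3) by blast
  then show ?thesis
    unfolding hg_restrict_def by auto
qed

lemma fst_cl_of [simp]: "fst (cl_of S E) = card S"
  unfolding cl_of_def by simp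

lemma cl_of_relabel:
  assumes "bij_betw f S S'" "E \<subseteq> Pow S"
  shows "cl_of S' (relabel f E) = cl_of S E"
proof -
  have card: "card S' = card S" using bij_betw_same_card[OF assms(1)] by simp
  have "(\<exists>g. bij_betw g S' {1..card S'} \<and> E' = relabel g (relabel f E))
      \<longleftrightarrow> (\<exists>g. bij_betw g S {1..card S} \<and> E' = relabel g E)" for E'
  proof
    assume "\<exists>g. bij_betw g S' {1..card S'} \<and> E' = relabel g (relabel f E)"
    then obtain g where "bij_betw g S' {1..card S'}" "E' = relabel g (relabel f E)" by blast
    then show "\<exists>g. bij_betw g S {1..card S} \<and> E' = relabel g E"
      using bij_betw_trans[OF assms(1)] card by (metis relabel_comp)
  next
    assume "\<exists>g. bij_betw g S {1..card S} \<and> E' = relabel g E"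
    then obtain g where g: "bij_betw g S {1..card S}" "E' = relabel g E" by blast
    have "bij_betw (g \<circ> inv_into S f) S' {1..card S'}"
      using bij_betw_trans[OF bij_betw_inv_into[OF assms(1)] g(1)] card by simp
    moreover have "E' = relabel (g \<circ> inv_into S f) (relabel f E)"
      using g(2) relabel_inv_into[OF assms(2) bij_betw_imp_inj_on[OF assms(1)]]
      by (simp only: relabel_comp)
    ultimately show "\<exists>g. bij_betw g S' {1..card S'} \<and> E' = relabel g (relabel f E)" by blast
  qed
  then show ?thesis
    unfolding cl_of_def card by simp
qed

lemma cl_of_eqE:
  assumes "cl_of S E = cl_of S' E'" "finite S" "E' \<subseteq> Pow S'"
  obtains f where "bij_betw f S S'" "E' = relabel f E"
proof -
  have card: "card S = card S'" using arg_cong[OF assms(1), of fst] by simp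
  obtain g where g: "bij_betw g S {1..card S}"
    using finite_same_card_bij[OF assms(2), of "{1..card S}"] by auto
  have "relabel g E \<in> snd (cl_of S E)"
    using g unfolding cl_of_def by auto
  then have "relabel g E \<in> snd (cl_of S' E')"
    by (simp only: assms(1))
  then obtain g' where g': "bij_betw g' S' {1..card S}" "relabel g E = relabel g' E'"
    unfolding cl_of_def card by auto
  have "bij_betw (inv_into S' g' \<circ> g) S S'"
    by (rule bij_betw_trans[OF g bij_betw_inv_into[OF g'(1)]])
  moreover have "E' = relabel (inv_into S' g' \<circ> g) E"
    using relabel_inv_into[OF assms(3) bij_betw_imp_inj_on[OF g'(1)]] g'(2)
    by (simp only: relabel_comp)
  ultimately show ?thesis by (rule that)
qed

lemma cl_of_in_fock_classes:
  assumes "finite S" "E \<in> HG S"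
  shows "cl_of S E \<in> fock_classes"
proof -
  obtain g where g: "bij_betw g S {1..card S}"
    using finite_same_card_bij[OF assms(1), of "{1..card S}"] by auto
  then have "cl_of S E = cl_of {1..card S} (relabel g E)" "relabel g E \<in> HG {1..card S}"
    using cl_of_relabel[OF g HG_subset_Pow[OF assms(2)]] relabel_in_HG[OF g assms(2)] by simp_all
  then show ?thesis
    unfolding fock_classes_def by blast
qed

lemma fock_classesE:
  assumes "c \<in> fock_classes"
  obtains E where "E \<in> HG {1..fst c}" "c = cl_of {1..fst c} E"
  using assms unfolding fock_classes_def by auto

lemma snd_cl_of:
  assumes "E \<in> HG {1..n}"
  shows "snd (cl_of {1..n} E) = {H \<in> HG {1..n}. cl_of {1..n} H = cl_of {1..n} E}"
proof (intro equalityI subsetI)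
  fix H assume "H \<in> snd (cl_of {1..n} E)"
  then obtain \<sigma> where \<sigma>: "bij_betw \<sigma> {1..n} {1..n}" "H = relabel \<sigma> E"
    unfolding cl_of_def by auto
  then show "H \<in> {H \<in> HG {1..n}. cl_of {1..n} H = cl_of {1..n} E}"
    using relabel_in_HG[OF \<sigma>(1) assms] cl_of_relabel[OF \<sigma>(1) HG_subset_Pow[OF assms]] by simp
next
  fix H assume "H \<in> {H \<in> HG {1..n}. cl_of {1..n} H = cl_of {1..n} E}"
  then have H: "cl_of {1..n} E = cl_of {1..n} H" "H \<subseteq> Pow {1..n}"
    using HG_subset_Pow by auto
  obtain \<sigma> where "bij_betw \<sigma> {1..n} {1..n}" "H = relabel \<sigma> E"
    using cl_of_eqE[OF H(1) finite_atLeastAtMost H(2)] .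
  then show "H \<in> snd (cl_of {1..n} E)"
    unfolding cl_of_def by auto
qed

lemma snd_fock_class:
  assumes "c \<in> fock_classes"
  shows "snd c = {H \<in> HG {1..fst c}. cl_of {1..fst c} H = c}"
proof -
  obtain E where "E \<in> HG {1..fst c}" "c = cl_of {1..fst c} E"
    using fock_classesE[OF assms] .
  then show ?thesis
    using snd_cl_of[of E "fst c"] by simp
qed

lemma fock_rep:
  assumes "c \<in> fock_classes"
  shows "fock_rep c \<in> HG {1..fst c}" "cl_of {1..fst c} (fock_rep c) = c"
proof -
  have "\<exists>G. G \<in> HG {1..fst c} \<and> cl_of {1..fst c} G = c"
    using fock_classesE[OF assms] by metis
  then have "fock_rep c \<in> HG {1..fst c} \<and> cl_of {1..fst c} (fock_rep c) = c"
    unfolding fock_rep_def by (rule someI_ex)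
  then show "fock_rep c \<in> HG {1..fst c}" "cl_of {1..fst c} (fock_rep c) = c" by simp_all
qed

lemma fock_classes_of_card: "{c \<in> fock_classes. fst c = n} = cl_of {1..n} ` HG {1..n}"
  using cl_of_in_fock_classes[of "{1..n}"] by (auto elim: fock_classesE)

lemma finite_fock_classes_of_card: "finite {c \<in> fock_classes. fst c = n}"
  unfolding fock_classes_of_card by (simp add: finite_HG)

lemma fock_class_of_card_0:
  assumes "c \<in> fock_classes" "fst c = 0"
  shows "c = cl_of {} {}"
  using assms by (auto elim!: fock_classesE simp: HG_empty)

lemma cls_eq_sum: "cls n v c = (\<Sum>H\<in>{H \<in> HG {1..n}. cl_of {1..n} H = c}. v H)"
proof (cases "c \<in> fock_classes \<and> fst c = n")
  case True
  then show ?thesis unfolding cls_def using snd_fock_class[of c] by simp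
next
  case False
  then have "{H \<in> HG {1..n}. cl_of {1..n} H = c} = {}"
    using cl_of_in_fock_classes[of "{1..n}"] by auto
  with False show ?thesis
    unfolding cls_def by (simp only: if_False sum.empty)
qed

lemma cls_in_fock_space: "cls n v \<in> fock_space"
proof -
  have "{c. cls n v c \<noteq> 0} \<subseteq> {c \<in> fock_classes. fst c = n}"
    unfolding cls_def by auto
  then show ?thesis
    unfolding fock_space_def using finite_fock_classes_of_card finite_subset by blast
qed

lemma cls_lincomb: "cls n (\<Sum>a\<in>t. fscale (u a) a) = (\<Sum>a\<in>t. fscale (u a) (cls n (a :: _ \<Rightarrow> 'k::field)))"
  unfolding cls_eq_sum sum_apply by (simp add: sum_distrib_left sum.swap[of _ t])

lemma cls_in_span:
  assumes "x \<in> module.span fscale A"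
  shows "cls n x \<in> module.span fscale (cls n ` (A :: (_ \<Rightarrow> 'k::field) set))"
proof -
  obtain t u where t: "finite t" "t \<subseteq> A" "x = (\<Sum>a\<in>t. fscale (u a) a)"
    using assms unfolding module.span_explicit[OF module_fscale] by blast
  have "(\<Sum>a\<in>t. fscale (u a) (cls n a)) \<in> module.span fscale (cls n ` A)"
    using t(2) by (intro module.span_sum[OF module_fscale] module.span_scale[OF module_fscale]
        module.span_base[OF module_fscale]) auto
  then show ?thesis
    unfolding t(3) cls_lincomb .
qed

definition split_count :: "nat \<Rightarrow> nat set set \<Rightarrow> hgclass \<Rightarrow> hgclass \<Rightarrow> nat" where
  "split_count n H c1 c2 = card {S. S \<subseteq> {1..n} \<and> cl_of S (hg_restrict H S) = c1
      \<and> cl_of ({1..n} - S) (hg_restrict H ({1..n} - S)) = c2}"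

lemma fock_delta_eq_sum:
  assumes "h \<in> fock_space" "finite F" "{c. h c \<noteq> 0} \<subseteq> F"
  shows "fock_delta h (c1, c2) = (\<Sum>c\<in>F. h c * of_nat (split_count (fst c) (fock_rep c) c1 c2))"
proof -
  have "{c \<in> fock_classes. h c \<noteq> 0} = {c. h c \<noteq> 0}"
    using assms(1) unfolding fock_space_def by auto
  then show ?thesis
    unfolding fock_delta_def split_count_def using assms(2,3)
    by (simp, intro sum.mono_neutral_left) auto
qed

lemma split_count_relabel:
  assumes \<sigma>: "bij_betw \<sigma> {1..n} {1..n}" and H: "H \<in> HG {1..n}"
  shows "split_count n (relabel \<sigma> H) c1 c2 = split_count n H c1 c2"
proof -
  have inj: "inj_on \<sigma> {1..n}" using \<sigma> by (rule bij_betw_imp_inj_on)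
  have HP: "H \<subseteq> Pow {1..n}" by (rule HG_subset_Pow[OF H])
  have "bij_betw (image \<sigma>)
      {S \<in> Pow {1..n}. cl_of S (hg_restrict H S) = c1 \<and> cl_of ({1..n} - S) (hg_restrict H ({1..n} - S)) = c2}
      {S \<in> Pow {1..n}. cl_of S (hg_restrict (relabel \<sigma> H) S) = c1
         \<and> cl_of ({1..n} - S) (hg_restrict (relabel \<sigma> H) ({1..n} - S)) = c2}"
  proof (rule bij_betw_filter[OF bij_betw_Pow[OF \<sigma>]])
    fix S assume "S \<in> Pow {1..n}"
    then have S: "S \<subseteq> {1..n}" by simp
    have compl: "{1..n} - \<sigma> ` S = \<sigma> ` ({1..n} - S)"
      using bij_betw_imp_surj_on[OF \<sigma>] inj_on_image_set_diff[OF inj _ S] by simp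
    have "cl_of (\<sigma> ` S) (hg_restrict (relabel \<sigma> H) (\<sigma> ` S)) = cl_of S (hg_restrict H S)"
      unfolding hg_restrict_relabel[OF inj HP S]
      by (rule cl_of_relabel) (use inj S in \<open>auto simp: bij_betw_def inj_on_subset hg_restrict_def\<close>)
    moreover have "cl_of (\<sigma> ` ({1..n} - S)) (hg_restrict (relabel \<sigma> H) (\<sigma> ` ({1..n} - S)))
        = cl_of ({1..n} - S) (hg_restrict H ({1..n} - S))"
      unfolding hg_restrict_relabel[OF inj HP Diff_subset]
      by (rule cl_of_relabel) (use inj in \<open>auto simp: bij_betw_def inj_on_subset hg_restrict_def\<close>)
    ultimately show "(cl_of (\<sigma> ` S) (hg_restrict (relabel \<sigma> H) (\<sigma> ` S)) = c1
        \<and> cl_of ({1..n} - \<sigma> ` S) (hg_restrict (relabel \<sigma> H) ({1..n} - \<sigma> ` S)) = c2)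
      \<longleftrightarrow> (cl_of S (hg_restrict H S) = c1 \<and> cl_of ({1..n} - S) (hg_restrict H ({1..n} - S)) = c2)"
      unfolding compl by simp
  qed
  then show ?thesis
    unfolding split_count_def by (simp add: Pow_def bij_betw_same_card)
qed

lemma split_count_eq_0:
  assumes "m \<noteq> fst c1 + fst c2"
  shows "split_count m H c1 c2 = 0"
proof -
  have "card S + card ({1..m} - S) = m" if "S \<subseteq> {1..m}" for S :: "nat set"
    using that card_Diff_subset[of S "{1..m}"] card_mono[of "{1..m}" S] by (simp add: finite_subset)
  then have "{S. S \<subseteq> {1..m} \<and> cl_of S (hg_restrict H S) = c1
      \<and> cl_of ({1..m} - S) (hg_restrict H ({1..m} - S)) = c2} = {}"
    using assms by auto
  then show ?thesis
    unfolding split_count_def by simp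
qed

lemma fock_delta_cls:
  "fock_delta (cls n v) (c1, c2) = (\<Sum>H\<in>HG {1..n}. v H * of_nat (split_count n H c1 c2))"
proof -
  let ?C = "{c \<in> fock_classes. fst c = n}"
  have "{c. cls n v c \<noteq> 0} \<subseteq> ?C"
    by (auto simp: cls_def)
  then have "fock_delta (cls n v) (c1, c2)
      = (\<Sum>c\<in>?C. cls n v c * of_nat (split_count (fst c) (fock_rep c) c1 c2))"
    by (rule fock_delta_eq_sum[OF cls_in_fock_space finite_fock_classes_of_card])
  also have "\<dots> = (\<Sum>c\<in>?C. cls n v c * of_nat (split_count n (fock_rep c) c1 c2))"
    by (intro sum.cong) auto
  also have "\<dots> = (\<Sum>c\<in>?C. \<Sum>H\<in>{H \<in> HG {1..n}. cl_of {1..n} H = c}. v H * of_nat (split_count n H c1 c2))"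
  proof (intro sum.cong refl)
    fix c assume "c \<in> ?C"
    then have rep: "fock_rep c \<in> HG {1..n}" "cl_of {1..n} (fock_rep c) = c"
      using fock_rep[of c] by auto
    have "split_count n (fock_rep c) c1 c2 = split_count n H c1 c2"
      if "H \<in> HG {1..n}" "cl_of {1..n} H = c" for H
    proof -
      have "cl_of {1..n} (fock_rep c) = cl_of {1..n} H" "H \<subseteq> Pow {1..n}"
        using rep(2) that HG_subset_Pow by auto
      then obtain \<sigma> where "bij_betw \<sigma> {1..n} {1..n}" "H = relabel \<sigma> (fock_rep c)"
        using cl_of_eqE[OF _ finite_atLeastAtMost] by metis
      then show ?thesis
        using split_count_relabel rep(1) by simp
    qed
    then show "cls n v c * of_nat (split_count n (fock_rep c) c1 c2)
        = (\<Sum>H\<in>{H \<in> HG {1..n}. cl_of {1..n} H = c}. v H * of_nat (split_count n H c1 c2))"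
      unfolding cls_eq_sum sum_distrib_right by (intro sum.cong) auto
  qed
  also have "\<dots> = (\<Sum>H\<in>HG {1..n}. v H * of_nat (split_count n H c1 c2))"
    by (rule sum.group) (auto simp: finite_HG finite_fock_classes_of_card fock_classes_of_card)
  finally show ?thesis .
qed

definition split_coeff :: "nat set \<Rightarrow> nat set \<Rightarrow> (nat set set \<Rightarrow> 'k::field) \<Rightarrow> hgclass \<Rightarrow> hgclass \<Rightarrow> 'k" where
  "split_coeff I S v c1 c2 = (\<Sum>y\<in>HG S \<times> HG (I - S).
     if cl_of S (fst y) = c1 \<and> cl_of (I - S) (snd y) = c2 then coprod_ST I S (I - S) v y else 0)"

lemma split_coeff_eq:
  assumes "finite I" "S \<subseteq> I"
  shows "split_coeff I S v c1 c2 = (\<Sum>H\<in>HG I.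
    if cl_of S (hg_restrict H S) = c1 \<and> cl_of (I - S) (hg_restrict H (I - S)) = c2 then v H else 0)"
proof -
  define r where "r H = (hg_restrict H S, hg_restrict H (I - S))" for H
  have "finite S" using assms finite_subset by blast
  have "(\<Sum>H\<in>HG I. if cl_of S (hg_restrict H S) = c1 \<and> cl_of (I - S) (hg_restrict H (I - S)) = c2 then v H else 0)
      = (\<Sum>y\<in>HG S \<times> HG (I - S). \<Sum>H\<in>{H \<in> HG I. r H = y}.
          if cl_of S (hg_restrict H S) = c1 \<and> cl_of (I - S) (hg_restrict H (I - S)) = c2 then v H else 0)"
    using assms(1) \<open>finite S\<close>
    by (intro sum.group[symmetric]) (auto simp: r_def finite_HG hg_restrict_in_HG)
  also have "\<dots> = split_coeff I S v c1 c2"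
    unfolding split_coeff_def
  proof (intro sum.cong refl)
    fix y :: "nat set set \<times> nat set set"
    show "(\<Sum>H\<in>{H \<in> HG I. r H = y}.
          if cl_of S (hg_restrict H S) = c1 \<and> cl_of (I - S) (hg_restrict H (I - S)) = c2 then v H else 0)
        = (if cl_of S (fst y) = c1 \<and> cl_of (I - S) (snd y) = c2 then coprod_ST I S (I - S) v y else 0)"
      by (cases y) (auto simp: r_def coprod_ST_apply intro: sum.neutral)
  qed
  finally show ?thesis ..
qed

lemma fock_delta_cls_split:
  fixes v :: "nat set set \<Rightarrow> 'k::field"
  shows "fock_delta (cls n v) (c1, c2) = (\<Sum>S\<in>Pow {1..n}. split_coeff {1..n} S v c1 c2)"
proof -
  let ?P = "\<lambda>S H. cl_of S (hg_restrict H S) = c1 \<and> cl_of ({1..n} - S) (hg_restrict H ({1..n} - S)) = c2"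
  have count: "of_nat (split_count n H c1 c2) = (\<Sum>S\<in>Pow {1..n}. if ?P S H then 1 else 0 :: 'k)" for H
  proof -
    have "(\<Sum>S\<in>Pow {1..n}. if ?P S H then 1 else 0 :: 'k) = of_nat (card {S \<in> Pow {1..n}. ?P S H})"
      by (simp add: sum.inter_filter[symmetric])
    moreover have "{S. S \<subseteq> {1..n} \<and> ?P S H} = {S \<in> Pow {1..n}. ?P S H}" by auto
    ultimately show ?thesis
      unfolding split_count_def by simp
  qed
  have "fock_delta (cls n v) (c1, c2) = (\<Sum>H\<in>HG {1..n}. \<Sum>S\<in>Pow {1..n}. if ?P S H then v H else 0)"
    unfolding fock_delta_cls count sum_distrib_left by (intro sum.cong) auto
  also have "\<dots> = (\<Sum>S\<in>Pow {1..n}. \<Sum>H\<in>HG {1..n}. if ?P S H then v H else 0)"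
    by (rule sum.swap)
  also have "\<dots> = (\<Sum>S\<in>Pow {1..n}. split_coeff {1..n} S v c1 c2)"
    by (intro sum.cong refl split_coeff_eq[symmetric]) auto
  finally show ?thesis .
qed

lemma hg_restrict_empty: "H \<in> HG I \<Longrightarrow> hg_restrict H {} = {}"
  unfolding hg_restrict_def HG_def hyperedges_def by force

lemma hg_restrict_self: "H \<in> HG I \<Longrightarrow> hg_restrict H I = H"
  unfolding hg_restrict_def HG_def hyperedges_def by auto

lemma split_coeff_empty:
  assumes "finite I"
  shows "split_coeff I {} v c1 c2 = fock_one c1 * (\<Sum>G\<in>{G \<in> HG I. cl_of I G = c2}. v G)"
proof -
  have "split_coeff I {} v c1 c2
      = (\<Sum>H\<in>HG I. if cl_of {} {} = c1 \<and> cl_of I H = c2 then v H else 0)"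
    using assms by (simp add: split_coeff_eq hg_restrict_empty hg_restrict_self cong: sum.cong)
  then show ?thesis
    using assms by (cases "c1 = cl_of {} {}") (auto simp: fock_one_def sum.inter_filter finite_HG)
qed

lemma split_coeff_full:
  assumes "finite I"
  shows "split_coeff I I v c1 c2 = (\<Sum>G\<in>{G \<in> HG I. cl_of I G = c1}. v G) * fock_one c2"
proof -
  have "split_coeff I I v c1 c2
      = (\<Sum>H\<in>HG I. if cl_of I H = c1 \<and> cl_of {} {} = c2 then v H else 0)"
    using assms by (simp add: split_coeff_eq hg_restrict_empty hg_restrict_self cong: sum.cong)
  then show ?thesis
    using assms by (cases "c2 = cl_of {} {}") (auto simp: fock_one_def sum.inter_filter finite_HG)
qed

lemma fock_primitive_iff:
  "fock_primitive h \<longleftrightarrow> h \<in> fock_space \<and>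
     (\<forall>c1 c2. fock_delta h (c1, c2) = h c1 * fock_one c2 + fock_one c1 * h c2)"
  unfolding fock_primitive_def by (auto simp: fun_eq_iff)

lemma fock_primitive_delta:
  "fock_primitive h \<Longrightarrow> fock_delta h (c1, c2) = h c1 * fock_one c2 + fock_one c1 * h c2"
  unfolding fock_primitive_def by simp

lemma cls_primitive:
  assumes "1 \<le> n" "hg_primitive {1..n} v"
  shows "fock_primitive (cls n v)"
proof -
  define I where "I = {1..n}"
  have "finite I" "{} \<noteq> I" using assms(1) unfolding I_def by auto
  have "fock_delta (cls n v) (c1, c2) = cls n v c1 * fock_one c2 + fock_one c1 * cls n v c2" for c1 c2
  proof -
    have "split_coeff I S v c1 c2 = 0" if "S \<in> Pow I - {{}, I}" for S
    proof -
      have "S \<union> (I - S) = I \<and> S \<inter> (I - S) = {} \<and> S \<noteq> {} \<and> I - S \<noteq> {}"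
        using that by auto
      then have "coprod_ST I S (I - S) v = (\<lambda>_. 0)"
        using assms(2)[unfolded hg_primitive_def, THEN conjunct2, rule_format] unfolding I_def by blast
      then show ?thesis unfolding split_coeff_def by (simp cong: if_cong)
    qed
    then have "fock_delta (cls n v) (c1, c2) = (\<Sum>S\<in>{{}, I}. split_coeff I S v c1 c2)"
      unfolding fock_delta_cls_split I_def[symmetric]
      using \<open>finite I\<close> by (intro sum.mono_neutral_right) auto
    also have "\<dots> = split_coeff I {} v c1 c2 + split_coeff I I v c1 c2"
      using \<open>{} \<noteq> I\<close> by simp
    also have "\<dots> = fock_one c1 * cls n v c2 + cls n v c1 * fock_one c2"
      unfolding split_coeff_empty[OF \<open>finite I\<close>] split_coeff_full[OF \<open>finite I\<close>] cls_eq_sum I_def[symmetric] ..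
    finally show ?thesis
      by simp
  qed
  then show ?thesis
    unfolding fock_primitive_iff using cls_in_fock_space by blast
qed

lemma fock_space_add: "x \<in> fock_space \<Longrightarrow> y \<in> fock_space \<Longrightarrow> x + y \<in> fock_space"
proof -
  assume "x \<in> fock_space" "y \<in> fock_space"
  moreover have "{c. (x + y) c \<noteq> 0} \<subseteq> {c. x c \<noteq> 0} \<union> {c. y c \<noteq> 0}" by auto
  ultimately show ?thesis
    unfolding fock_space_def by (auto intro: finite_subset)
qed

lemma fock_space_scale: "x \<in> fock_space \<Longrightarrow> fscale a x \<in> fock_space"
  unfolding fock_space_def by (auto intro: rev_finite_subset)

lemma fock_delta_add:
  assumes "x \<in> fock_space" "y \<in> fock_space"
  shows "fock_delta (x + y) (c1, c2) = fock_delta x (c1, c2) + fock_delta y (c1, c2)"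
proof -
  let ?F = "{c. x c \<noteq> 0} \<union> {c. y c \<noteq> 0}"
  let ?N = "\<lambda>c. of_nat (split_count (fst c) (fock_rep c) c1 c2)"
  have fin: "finite ?F" using assms unfolding fock_space_def by simp
  have "fock_delta (x + y) (c1, c2) = (\<Sum>c\<in>?F. (x + y) c * ?N c)"
    by (rule fock_delta_eq_sum[OF fock_space_add[OF assms] fin]) auto
  also have "\<dots> = (\<Sum>c\<in>?F. x c * ?N c) + (\<Sum>c\<in>?F. y c * ?N c)"
    by (simp add: distrib_right sum.distrib)
  also have "\<dots> = fock_delta x (c1, c2) + fock_delta y (c1, c2)"
    using fock_delta_eq_sum[OF assms(1) fin] fock_delta_eq_sum[OF assms(2) fin] by auto
  finally show ?thesis .
qed

lemma fock_delta_scale: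
  assumes "x \<in> fock_space"
  shows "fock_delta (fscale a x) (c1, c2) = a * fock_delta x (c1, c2)"
proof -
  let ?F = "{c. x c \<noteq> 0}"
  let ?N = "\<lambda>c. of_nat (split_count (fst c) (fock_rep c) c1 c2)"
  have fin: "finite ?F" using assms unfolding fock_space_def by simp
  have "fock_delta (fscale a x) (c1, c2) = (\<Sum>c\<in>?F. (a * x c) * ?N c)"
    by (rule fock_delta_eq_sum[OF fock_space_scale[OF assms] fin]) auto
  also have "\<dots> = a * fock_delta x (c1, c2)"
    using fock_delta_eq_sum[OF assms fin] by (simp add: sum_distrib_left mult.assoc)
  finally show ?thesis .
qed

lemma subspace_fock_primitives: "module.subspace fscale {h. fock_primitive (h :: _ \<Rightarrow> 'k::field)}"
proof (rule module.subspaceI[OF module_fscale])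
  have "fock_delta (0 :: _ \<Rightarrow> 'k) (c1, c2) = 0" for c1 c2
    using fock_delta_eq_sum[of 0 "{}"] by (simp add: fock_space_def)
  then show "0 \<in> {h. fock_primitive (h :: _ \<Rightarrow> 'k)}"
    by (simp add: fock_primitive_iff fock_space_def)
next
  fix x y :: "_ \<Rightarrow> 'k" assume "x \<in> {h. fock_primitive h}" "y \<in> {h. fock_primitive h}"
  then show "x + y \<in> {h. fock_primitive h}"
    by (simp add: fock_primitive_iff fock_space_add fock_delta_add algebra_simps)
next
  fix a :: 'k and x :: "_ \<Rightarrow> 'k" assume "x \<in> {h. fock_primitive h}"
  then show "fscale a x \<in> {h. fock_primitive h}"
    by (simp add: fock_primitive_iff fock_space_scale fock_delta_scale algebra_simps)
qed

lemma span_cls_omega_subset_fock_primitives: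
  "module.span fscale {cls n (omega {1..n} G :: nat set set \<Rightarrow> 'k::field) | n G.
      1 \<le> n \<and> G \<in> HG {1..n} \<and> hg_connected {1..n} (hg_compl {1..n} G)}
   \<subseteq> {h. fock_primitive h}"
  by (intro module.span_minimal[OF module_fscale _ subspace_fock_primitives])
    (blast intro: cls_primitive omega_primitive finite_atLeastAtMost)

section \<open>Lifting primitives of F(kHG) to symmetric primitives of kHG\<close>

definition fock_degree_part :: "(hgclass \<Rightarrow> 'k::field) \<Rightarrow> nat \<Rightarrow> hgclass \<Rightarrow> 'k" where
  "fock_degree_part h n = (\<lambda>c. if fst c = n then h c else 0)"

text \<open>Spreads h c evenly over the isomorphism class c; char k = 0 makes the class sizes invertible.\<close>

definition symmetric_lift :: "(hgclass \<Rightarrow> 'k::field) \<Rightarrow> nat \<Rightarrow> nat set set \<Rightarrow> 'k" where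
  "symmetric_lift h n H = (if H \<in> HG {1..n}
     then h (cl_of {1..n} H) / of_nat (card (snd (cl_of {1..n} H))) else 0)"

lemma cls_symmetric_lift:
  assumes "h \<in> fock_space"
  shows "cls n (symmetric_lift h n :: _ \<Rightarrow> 'k::field_char_0) = fock_degree_part h n"
proof
  fix c
  show "cls n (symmetric_lift h n) c = fock_degree_part h n c"
  proof (cases "c \<in> fock_classes \<and> fst c = n")
    case True
    then have c: "c \<in> fock_classes" "fst c = n" by simp_all
    then have orbit: "snd c = {H \<in> HG {1..n}. cl_of {1..n} H = c}"
      using snd_fock_class[OF c(1)] by simp
    have "finite (snd c)"
      unfolding orbit by (simp add: finite_HG)
    moreover have "snd c \<noteq> {}"
      using fock_rep[OF c(1)] c(2) unfolding orbit by blast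
    moreover have "symmetric_lift h n H = h c / of_nat (card (snd c))" if "H \<in> snd c" for H
    proof -
      have "H \<in> HG {1..n}" "cl_of {1..n} H = c"
        using that orbit by auto
      then show ?thesis by (simp add: symmetric_lift_def)
    qed
    ultimately have "(\<Sum>H\<in>snd c. symmetric_lift h n H) = h c"
      by simp
    then show ?thesis
      using True by (simp add: cls_def fock_degree_part_def)
  next
    case False
    have "h c = 0" if "c \<notin> fock_classes"
      using assms that unfolding fock_space_def by blast
    with False show ?thesis
      by (auto simp: cls_def fock_degree_part_def)
  qed
qed

lemma symmetric_lift_relabel:
  assumes "bij_betw \<sigma> {1..n} {1..n}" "H \<in> HG {1..n}"
  shows "symmetric_lift h n (relabel \<sigma> H) = symmetric_lift h n H"
  using relabel_in_HG[OF assms] cl_of_relabel[OF assms(1) HG_subset_Pow[OF assms(2)]] assms(2)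
  by (simp add: symmetric_lift_def)

lemma fock_degree_part_in_fock_space: "h \<in> fock_space \<Longrightarrow> fock_degree_part h n \<in> fock_space"
  unfolding fock_space_def fock_degree_part_def by (auto intro: rev_finite_subset)

lemma fock_delta_degree_part:
  assumes "h \<in> fock_space" "fst c1 + fst c2 = n"
  shows "fock_delta h (c1, c2) = fock_delta (fock_degree_part h n) (c1, c2)"
proof -
  let ?F = "{c. h c \<noteq> 0}"
  let ?N = "\<lambda>c. of_nat (split_count (fst c) (fock_rep c) c1 c2)"
  have fin: "finite ?F" using assms unfolding fock_space_def by simp
  have "fock_delta h (c1, c2) = (\<Sum>c\<in>?F. h c * ?N c)"
    by (rule fock_delta_eq_sum[OF assms(1) fin]) auto
  also have "\<dots> = (\<Sum>c\<in>?F. fock_degree_part h n c * ?N c)"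
    using split_count_eq_0 assms(2) by (intro sum.cong) (auto simp: fock_degree_part_def)
  also have "\<dots> = fock_delta (fock_degree_part h n) (c1, c2)"
    by (rule fock_delta_eq_sum[OF fock_degree_part_in_fock_space[OF assms(1)] fin, symmetric])
      (auto simp: fock_degree_part_def)
  finally show ?thesis .
qed

lemma fock_primitive_unit_eq_0:
  assumes "fock_primitive (h :: _ \<Rightarrow> 'k::field_char_0)"
  shows "h (cl_of {} {}) = 0"
proof -
  have h: "h \<in> fock_space" using assms by (simp add: fock_primitive_iff)
  have split: "split_count 0 {} (cl_of {} {}) (cl_of {} {}) = 1"
    unfolding split_count_def hg_restrict_def by (simp add: Collect_conv_if)
  have "fock_delta h (cl_of {} {}, cl_of {} {}) = fock_delta (cls 0 (symmetric_lift h 0)) (cl_of {} {}, cl_of {} {})"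
    using fock_delta_degree_part[OF h] cls_symmetric_lift[OF h] by simp
  also have "\<dots> = symmetric_lift h 0 {}"
    unfolding fock_delta_cls using split by (simp add: HG_empty)
  also have "\<dots> = cls 0 (symmetric_lift h 0) (cl_of {} {})"
    by (simp add: cls_eq_sum HG_empty Collect_conv_if)
  also have "\<dots> = h (cl_of {} {})"
    using cls_symmetric_lift[OF h] by (simp add: fock_degree_part_def)
  finally have "fock_delta h (cl_of {} {}, cl_of {} {}) = h (cl_of {} {})" .
  moreover have "fock_delta h (cl_of {} {}, cl_of {} {}) = h (cl_of {} {}) + h (cl_of {} {})"
    using fock_primitive_delta[OF assms] by (simp add: fock_one_def)
  ultimately show ?thesis by simp
qed

lemma coprod_ST_relabel:
  fixes w :: "'a set set \<Rightarrow> 'k::field"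
  assumes \<sigma>: "bij_betw \<sigma> I I" and "S \<subseteq> I"
    and invariant: "\<And>H. H \<in> HG I \<Longrightarrow> w (relabel \<sigma> H) = w H"
    and G: "G1 \<subseteq> Pow S" "G2 \<subseteq> Pow (I - S)"
  shows "coprod_ST I (\<sigma> ` S) (I - \<sigma> ` S) w (relabel \<sigma> G1, relabel \<sigma> G2) = coprod_ST I S (I - S) w (G1, G2)"
proof -
  have inj: "inj_on \<sigma> I" by (rule bij_betw_imp_inj_on[OF \<sigma>])
  have compl: "I - \<sigma> ` S = \<sigma> ` (I - S)"
    using bij_betw_imp_surj_on[OF \<sigma>] inj_on_image_set_diff[OF inj _ \<open>S \<subseteq> I\<close>] by simp
  have inj_relabel: "inj_on (relabel \<sigma>) (Pow (Pow I))"
    by (rule inj_on_image_Pow[OF inj_on_image_Pow[OF inj]])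
  have fibres: "bij_betw (relabel \<sigma>)
      {H \<in> HG I. hg_restrict H S = G1 \<and> hg_restrict H (I - S) = G2}
      {H \<in> HG I. hg_restrict H (\<sigma> ` S) = relabel \<sigma> G1 \<and> hg_restrict H (I - \<sigma> ` S) = relabel \<sigma> G2}"
  proof (rule bij_betw_filter[OF bij_betw_relabel_HG[OF \<sigma>]])
    fix H assume "H \<in> HG I"
    then have HP: "H \<subseteq> Pow I" by (rule HG_subset_Pow)
    have "hg_restrict H S \<in> Pow (Pow I)" "hg_restrict H (I - S) \<in> Pow (Pow I)"
      "G1 \<in> Pow (Pow I)" "G2 \<in> Pow (Pow I)"
      using HP G \<open>S \<subseteq> I\<close> by (auto simp: hg_restrict_def) blast
    then show "(hg_restrict (relabel \<sigma> H) (\<sigma> ` S) = relabel \<sigma> G1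
          \<and> hg_restrict (relabel \<sigma> H) (I - \<sigma> ` S) = relabel \<sigma> G2)
        \<longleftrightarrow> (hg_restrict H S = G1 \<and> hg_restrict H (I - S) = G2)"
      unfolding compl hg_restrict_relabel[OF inj HP \<open>S \<subseteq> I\<close>] hg_restrict_relabel[OF inj HP Diff_subset]
      by (simp add: inj_on_eq_iff[OF inj_relabel])
  qed
  have "coprod_ST I (\<sigma> ` S) (I - \<sigma> ` S) w (relabel \<sigma> G1, relabel \<sigma> G2)
      = (\<Sum>H\<in>{H \<in> HG I. hg_restrict H S = G1 \<and> hg_restrict H (I - S) = G2}. w (relabel \<sigma> H))"
    unfolding coprod_ST_apply by (rule sum.reindex_bij_betw[OF fibres, symmetric])
  also have "\<dots> = coprod_ST I S (I - S) w (G1, G2)"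
    unfolding coprod_ST_apply using invariant by (intro sum.cong) auto
  finally show ?thesis .
qed

lemma coprod_ST_relabel_invariant:
  fixes w :: "nat set set \<Rightarrow> 'k::field"
  assumes invariant: "\<And>\<sigma> H. bij_betw \<sigma> I I \<Longrightarrow> H \<in> HG I \<Longrightarrow> w (relabel \<sigma> H) = w H"
    and I: "finite I" "S \<subseteq> I" "S' \<subseteq> I"
    and G: "G1 \<in> HG S" "G2 \<in> HG (I - S)" "G1' \<in> HG S'" "G2' \<in> HG (I - S')"
    and cl: "cl_of S G1 = cl_of S' G1'" "cl_of (I - S) G2 = cl_of (I - S') G2'"
  shows "coprod_ST I S' (I - S') w (G1', G2') = coprod_ST I S (I - S) w (G1, G2)"
proof -
  obtain f1 where f1: "bij_betw f1 S S'" "G1' = relabel f1 G1"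
    using cl_of_eqE[OF cl(1) finite_subset[OF I(2,1)] HG_subset_Pow[OF G(3)]] .
  obtain f2 where f2: "bij_betw f2 (I - S) (I - S')" "G2' = relabel f2 G2"
    using cl_of_eqE[OF cl(2) finite_Diff[OF I(1)] HG_subset_Pow[OF G(4)]] .
  define \<sigma> where "\<sigma> x = (if x \<in> S then f1 x else f2 x)" for x
  have \<sigma>1: "bij_betw \<sigma> S S'"
    using f1(1) by (rule bij_betw_cong[THEN iffD1, rotated]) (simp add: \<sigma>_def)
  have \<sigma>2: "bij_betw \<sigma> (I - S) (I - S')"
    using f2(1) by (rule bij_betw_cong[THEN iffD1, rotated]) (simp add: \<sigma>_def)
  have "bij_betw \<sigma> (S \<union> (I - S)) (S' \<union> (I - S'))"
    by (rule bij_betw_combine[OF \<sigma>1 \<sigma>2]) blast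
  then have \<sigma>: "bij_betw \<sigma> I I"
    using I(2,3) by (simp add: Un_absorb1)
  have "G1' = relabel \<sigma> G1"
    unfolding f1(2) by (rule relabel_cong[OF HG_subset_Pow[OF G(1)]]) (simp add: \<sigma>_def)
  moreover have "G2' = relabel \<sigma> G2"
    unfolding f2(2) by (rule relabel_cong[OF HG_subset_Pow[OF G(2)]]) (simp add: \<sigma>_def)
  moreover have "S' = \<sigma> ` S"
    using bij_betw_imp_surj_on[OF \<sigma>1] by simp
  ultimately show ?thesis
    using coprod_ST_relabel[where w = w, OF \<sigma> I(2) invariant[OF \<sigma>] HG_subset_Pow[OF G(1)] HG_subset_Pow[OF G(2)]]
    by simp
qed

lemma fock_delta_cls_invariant:
  fixes w :: "nat set set \<Rightarrow> 'k::field"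
  assumes invariant: "\<And>\<sigma> H. bij_betw \<sigma> {1..n} {1..n} \<Longrightarrow> H \<in> HG {1..n} \<Longrightarrow> w (relabel \<sigma> H) = w H"
    and S: "S \<subseteq> {1..n}" and G: "G1 \<in> HG S" "G2 \<in> HG ({1..n} - S)"
  obtains M :: nat where "M \<noteq> 0"
    "fock_delta (cls n w) (cl_of S G1, cl_of ({1..n} - S) G2)
       = of_nat M * coprod_ST {1..n} S ({1..n} - S) w (G1, G2)"
proof -
  define I where "I = {1..n}"
  let ?x = "coprod_ST I S (I - S) w (G1, G2)"
  define P where "P S' y \<longleftrightarrow> cl_of S' (fst y) = cl_of S G1 \<and> cl_of (I - S') (snd y) = cl_of (I - S) G2"
    for S' y
  define M where "M = (\<Sum>S'\<in>Pow I. card {y \<in> HG S' \<times> HG (I - S'). P S' y})"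
  have "finite I" unfolding I_def by simp
  have fin: "finite (HG S' \<times> HG (I - S'))" if "S' \<in> Pow I" for S'
  proof -
    have "finite S'" using that \<open>finite I\<close> finite_subset by blast
    then show ?thesis using \<open>finite I\<close> by (simp add: finite_HG)
  qed
  have "fock_delta (cls n w) (cl_of S G1, cl_of (I - S) G2)
      = (\<Sum>S'\<in>Pow I. \<Sum>y\<in>HG S' \<times> HG (I - S'). if P S' y then coprod_ST I S' (I - S') w y else 0)"
    unfolding fock_delta_cls_split split_coeff_def I_def P_def ..
  also have "\<dots> = (\<Sum>S'\<in>Pow I. \<Sum>y\<in>HG S' \<times> HG (I - S'). if P S' y then ?x else 0)"
    using coprod_ST_relabel_invariant[OF invariant \<open>finite I\<close> S[folded I_def] _ G[folded I_def]]
    unfolding P_def I_def by (intro sum.cong refl if_cong) auto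
  also have "\<dots> = of_nat M * ?x"
    unfolding M_def of_nat_sum sum_distrib_right using fin
    by (intro sum.cong refl) (simp add: sum.inter_filter[symmetric])
  finally have "fock_delta (cls n w) (cl_of S G1, cl_of (I - S) G2) = of_nat M * ?x" .
  moreover have "M \<noteq> 0"
  proof -
    have "(G1, G2) \<in> {y \<in> HG S \<times> HG (I - S). P S y}"
      using G unfolding P_def I_def by simp
    then have "0 < card {y \<in> HG S \<times> HG (I - S). P S y}"
      using fin[of S] S unfolding I_def by (auto simp: card_gt_0_iff)
    also have "\<dots> \<le> M"
      unfolding M_def using S \<open>finite I\<close> unfolding I_def by (intro member_le_sum) auto
    finally show ?thesis by simp
  qed
  ultimately show ?thesis
    using that unfolding I_def by blast
qed

lemma symmetric_lift_primitive:
  fixes h :: "hgclass \<Rightarrow> 'k::field_char_0"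
  assumes prim: "fock_primitive h"
  shows "hg_primitive {1..n} (symmetric_lift h n)"
proof (rule hg_primitiveI)
  show "symmetric_lift h n \<in> kHG {1..n}"
    by (auto simp: kHG_def symmetric_lift_def)
next
  fix S G1 G2
  assume S: "S \<subseteq> {1..n}" "S \<noteq> {}" "{1..n} - S \<noteq> {}" and G: "G1 \<in> HG S" "G2 \<in> HG ({1..n} - S)"
  have h: "h \<in> fock_space" using prim by (simp add: fock_primitive_iff)
  obtain M :: nat where "M \<noteq> 0" and M:
    "fock_delta (cls n (symmetric_lift h n)) (cl_of S G1, cl_of ({1..n} - S) G2)
       = of_nat M * coprod_ST {1..n} S ({1..n} - S) (symmetric_lift h n) (G1, G2)"
    using fock_delta_cls_invariant[where w = "symmetric_lift h n", OF symmetric_lift_relabel S(1) G]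
    by blast
  have "finite S" "finite ({1..n} - S)"
    using S(1) finite_subset by auto
  then have "fst (cl_of S G1) \<noteq> 0" "fst (cl_of ({1..n} - S) G2) \<noteq> 0"
    using S by simp_all
  then have "cl_of S G1 \<noteq> cl_of {} {}" "cl_of ({1..n} - S) G2 \<noteq> cl_of {} {}"
    by (metis card.empty fst_cl_of)+
  then have "0 = h (cl_of S G1) * fock_one (cl_of ({1..n} - S) G2) + fock_one (cl_of S G1) * h (cl_of ({1..n} - S) G2)"
    by (simp add: fock_one_def)
  also have "\<dots> = fock_delta h (cl_of S G1, cl_of ({1..n} - S) G2)"
    by (rule fock_primitive_delta[OF prim, symmetric])
  also have "\<dots> = fock_delta (cls n (symmetric_lift h n)) (cl_of S G1, cl_of ({1..n} - S) G2)"
  proof -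
    have "card S \<le> n" "card ({1..n} - S) = n - card S"
      using S(1) by (simp_all add: card_Diff_subset finite_subset card_mono[of "{1..n}", simplified])
    then show ?thesis
      using fock_delta_degree_part[OF h] cls_symmetric_lift[OF h] by simp
  qed
  finally show "coprod_ST {1..n} S ({1..n} - S) (symmetric_lift h n) (G1, G2) = 0"
    using M \<open>M \<noteq> 0\<close> by simp
qed

lemma fock_primitive_in_span:
  assumes prim: "fock_primitive (h :: hgclass \<Rightarrow> 'k::field_char_0)"
  shows "h \<in> module.span fscale {cls n (omega {1..n} G :: nat set set \<Rightarrow> 'k) | n G.
      1 \<le> n \<and> G \<in> HG {1..n} \<and> hg_connected {1..n} (hg_compl {1..n} G)}"
    (is "_ \<in> module.span fscale ?B")
proof -
  have h: "h \<in> fock_space" using prim by (simp add: fock_primitive_iff)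
  define degrees where "degrees = fst ` {c. h c \<noteq> 0}"
  have "finite degrees" using h unfolding degrees_def fock_space_def by simp
  have "h = (\<Sum>n\<in>degrees. fock_degree_part h n)"
  proof
    fix c
    show "h c = (\<Sum>n\<in>degrees. fock_degree_part h n) c"
      using \<open>finite degrees\<close> by (auto simp: sum_apply fock_degree_part_def degrees_def)
  qed
  also have "\<dots> \<in> module.span fscale ?B"
  proof (intro module.span_sum[OF module_fscale])
    fix n assume "n \<in> degrees"
    have "1 \<le> n"
    proof (rule ccontr)
      assume "\<not> 1 \<le> n"
      then obtain c where c: "h c \<noteq> 0" "fst c = 0"
        using \<open>n \<in> degrees\<close> unfolding degrees_def by (auto simp: not_less_eq_eq)
      then have "c \<in> fock_classes"
        using h unfolding fock_space_def by blast
      then show False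
        using c fock_class_of_card_0 fock_primitive_unit_eq_0[OF prim] by metis
    qed
    let ?C = "{G \<in> HG {1..n}. hg_connected {1..n} (hg_compl {1..n} G)}"
    have "symmetric_lift h n \<in> module.span fscale ((omega {1..n} :: _ \<Rightarrow> _ \<Rightarrow> 'k) ` ?C)"
      using symmetric_lift_primitive[OF prim] by (simp add: primitive_basis(3))
    then have "cls n (symmetric_lift h n) \<in> module.span fscale (cls n ` (omega {1..n} :: _ \<Rightarrow> _ \<Rightarrow> 'k) ` ?C)"
      by (rule cls_in_span)
    also have "\<dots> \<subseteq> module.span fscale ?B"
      using \<open>1 \<le> n\<close> by (intro module.span_mono[OF module_fscale]) blast
    finally show "fock_degree_part h n \<in> module.span fscale ?B"
      using cls_symmetric_lift[OF h] by simp
  qed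
  finally show ?thesis .
qed

section \<open>Independence of the classes [omega G]\<close>

lemma omega_relabel:
  assumes \<sigma>: "bij_betw \<sigma> I I" and "finite I" "G \<in> HG I" "H \<in> HG I"
  shows "omega I (relabel \<sigma> G) (relabel \<sigma> H) = (omega I G H :: 'k::field)"
proof -
  have inj: "inj_on (image \<sigma>) (Pow I)"
    by (rule inj_on_image_Pow[OF bij_betw_imp_inj_on[OF \<sigma>]])
  have P: "G \<subseteq> Pow I" "H \<subseteq> Pow I"
    using assms(3,4) by (simp_all add: HG_subset_Pow)
  have "relabel \<sigma> G \<subseteq> relabel \<sigma> H \<longleftrightarrow> G \<subseteq> H"
    by (rule inj_on_image_subset_iff[OF inj P])
  moreover have "card (relabel \<sigma> H - relabel \<sigma> G) = card (H - G)"
    using P inj_on_image_set_diff[OF inj] card_image[OF inj_on_subset[OF inj]]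
    by (metis Diff_subset subset_trans)
  moreover have "relabel \<sigma> H \<subseteq> hyperedges I" "H \<subseteq> hyperedges I"
    using relabel_in_HG[OF \<sigma> assms(4)] assms(4) by (simp_all add: HG_def)
  ultimately show ?thesis
    unfolding omega_eq[OF assms(2)] by simp
qed

lemma cls_omega_relabel:
  assumes \<sigma>: "bij_betw \<sigma> {1..n} {1..n}" and G: "G \<in> HG {1..n}"
  shows "cls n (omega {1..n} (relabel \<sigma> G) :: _ \<Rightarrow> 'k::field) = cls n (omega {1..n} G)"
proof
  fix c
  let ?A = "{H \<in> HG {1..n}. cl_of {1..n} H = c}"
  have "bij_betw (relabel \<sigma>) ?A ?A"
    using cl_of_relabel[OF \<sigma> HG_subset_Pow]
    by (intro bij_betw_filter[OF bij_betw_relabel_HG[OF \<sigma>]]) simp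
  then have "(\<Sum>H\<in>?A. (omega {1..n} (relabel \<sigma> G) H :: 'k)) = (\<Sum>H\<in>?A. omega {1..n} (relabel \<sigma> G) (relabel \<sigma> H))"
    by (rule sum.reindex_bij_betw[symmetric])
  also have "\<dots> = (\<Sum>H\<in>?A. omega {1..n} G H)"
    using omega_relabel[OF \<sigma> finite_atLeastAtMost G] by (intro sum.cong) auto
  finally show "cls n (omega {1..n} (relabel \<sigma> G) :: _ \<Rightarrow> 'k) c = cls n (omega {1..n} G) c"
    unfolding cls_eq_sum .
qed

lemma cls_omega_at_class:
  assumes G0: "G0 \<in> HG {1..n0}" and G: "G \<in> HG {1..n}" and "card G0 \<le> card G"
  shows "(cls n (omega {1..n} G) (cl_of {1..n0} G0) :: 'k::field)
     = (if n = n0 \<and> cl_of {1..n0} G = cl_of {1..n0} G0 then 1 else 0)"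
proof (cases "n = n0")
  case True
  with G0 have G0: "G0 \<in> HG {1..n}" by simp
  let ?A = "{H \<in> HG {1..n}. cl_of {1..n} H = cl_of {1..n} G0}"
  \<comment> \<open>omega G is supported on supersets of G, and the orbit of G0 has no member larger than G.\<close>
  have "omega {1..n} G H = (if H = G then 1 else (0::'k))" if "H \<in> ?A" for H
  proof -
    have H: "H \<in> HG {1..n}" "cl_of {1..n} G0 = cl_of {1..n} H"
      using that by auto
    obtain \<sigma> where \<sigma>: "bij_betw \<sigma> {1..n} {1..n}" "H = relabel \<sigma> G0"
      using cl_of_eqE[OF H(2) finite_atLeastAtMost HG_subset_Pow[OF H(1)]] .
    have "inj_on (image \<sigma>) G0"
      using inj_on_image_Pow[OF bij_betw_imp_inj_on[OF \<sigma>(1)]] HG_subset_Pow[OF G0]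
      by (rule inj_on_subset)
    then have "card H \<le> card G"
      using \<sigma>(2) card_image[of "image \<sigma>" G0] \<open>card G0 \<le> card G\<close> by simp
    moreover have "finite H"
      using H(1) finite_HG[of "{1..n}"] finite_hyperedges[of "{1..n}"]
      by (simp add: HG_def finite_subset)
    ultimately have "G \<subseteq> H \<longleftrightarrow> H = G"
      using card_seteq by blast
    then show ?thesis
      using H(1) G by (auto simp: omega_eq HG_def)
  qed
  then have "cls n (omega {1..n} G) (cl_of {1..n} G0) = (\<Sum>H\<in>?A. if H = G then 1 else (0::'k))"
    unfolding cls_eq_sum by (intro sum.cong) auto
  also have "\<dots> = (if G \<in> ?A then 1 else 0)"
    by (simp add: sum.delta' finite_HG)
  finally show ?thesis using True G by auto
qed (simp add: cls_def)

lemma cls_omega_independent: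
  "\<not> module.dependent fscale {cls n (omega {1..n} G :: nat set set \<Rightarrow> 'k::field) | n G.
      1 \<le> n \<and> G \<in> HG {1..n} \<and> hg_connected {1..n} (hg_compl {1..n} G)}"
proof -
  define A :: "(nat \<times> nat set set) set"
    where "A = {(n, G). 1 \<le> n \<and> G \<in> HG {1..n} \<and> hg_connected {1..n} (hg_compl {1..n} G)}"
  define f where "f a = (cls (fst a) (omega {1..fst a} (snd a)) :: _ \<Rightarrow> 'k)" for a :: "nat \<times> nat set set"
  have "\<not> module.dependent fscale (f ` A)"
  proof (rule independent_if_triangular[where ev = "\<lambda>a h. h (cl_of {1..fst a} (snd a))"
        and rk = "\<lambda>a. card (snd a)"])
    fix a :: "nat \<times> nat set set" and t and u :: "_ \<Rightarrow> 'k"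
    show "(\<Sum>v\<in>t. fscale (u v) v) (cl_of {1..fst a} (snd a)) = (\<Sum>v\<in>t. u v * v (cl_of {1..fst a} (snd a)))"
      by (simp add: sum_apply)
  next
    fix a :: "nat \<times> nat set set" assume "a \<in> A"
    then show "f a (cl_of {1..fst a} (snd a)) \<noteq> 0"
      using cls_omega_at_class[of "snd a" "fst a" "snd a" "fst a", where 'k = 'k]
      unfolding A_def f_def by (auto split: prod.splits)
  next
    fix a b :: "nat \<times> nat set set"
    assume "a \<in> A" "b \<in> A" "card (snd a) \<le> card (snd b)" "f b \<noteq> f a"
    then have a: "snd a \<in> HG {1..fst a}" and b: "snd b \<in> HG {1..fst b}"
      unfolding A_def by auto
    have "\<not> (fst b = fst a \<and> cl_of {1..fst a} (snd b) = cl_of {1..fst a} (snd a))"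
    proof
      assume eq: "fst b = fst a \<and> cl_of {1..fst a} (snd b) = cl_of {1..fst a} (snd a)"
      then obtain \<sigma> where \<sigma>: "bij_betw \<sigma> {1..fst a} {1..fst a}" "snd a = relabel \<sigma> (snd b)"
        using cl_of_eqE[OF _ finite_atLeastAtMost HG_subset_Pow[OF a]] by metis
      have "f a = f b"
        using cls_omega_relabel[OF \<sigma>(1), of "snd b"] b eq \<sigma>(2) unfolding f_def by simp
      with \<open>f b \<noteq> f a\<close> show False by simp
    qed
    then show "f b (cl_of {1..fst a} (snd a)) = 0"
      using cls_omega_at_class[OF a b \<open>card (snd a) \<le> card (snd b)\<close>, where 'k = 'k]
      unfolding f_def by simp
  qed
  moreover have "f ` A = {cls n (omega {1..n} G) | n G.
      1 \<le> n \<and> G \<in> HG {1..n} \<and> hg_connected {1..n} (hg_compl {1..n} G)}"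
    unfolding A_def f_def by (auto simp: image_def)
  ultimately show ?thesis by simp
qed

lemma span_cls_omega_eq_fock_primitives:
  "module.span fscale {cls n (omega {1..n} G :: nat set set \<Rightarrow> 'k::field_char_0) | n G.
      1 \<le> n \<and> G \<in> HG {1..n} \<and> hg_connected {1..n} (hg_compl {1..n} G)}
   = {h. fock_primitive h}"
  using span_cls_omega_subset_fock_primitives fock_primitive_in_span by blast

theorem mainTheorem14:
  fixes I :: "'v set"
  assumes "finite I"
  shows "(inj_on (omega I :: 'v set set \<Rightarrow> 'v set set \<Rightarrow> 'k::field_char_0)
             {G \<in> HG I. hg_connected I (hg_compl I G)}
       \<and> \<not> module.dependent fscale
           ((omega I :: 'v set set \<Rightarrow> 'v set set \<Rightarrow> 'k) ` {G \<in> HG I. hg_connected I (hg_compl I G)})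
       \<and> module.span fscale
           ((omega I :: 'v set set \<Rightarrow> 'v set set \<Rightarrow> 'k) ` {G \<in> HG I. hg_connected I (hg_compl I G)})
         = {p. hg_primitive I p})
       \<and> (\<not> module.dependent fscale
           {cls n (omega {1..n} G :: nat set set \<Rightarrow> 'k) | n G.
              1 \<le> n \<and> G \<in> HG {1..n} \<and> hg_connected {1..n} (hg_compl {1..n} G)}
       \<and> module.span fscale
           {cls n (omega {1..n} G :: nat set set \<Rightarrow> 'k) | n G.
              1 \<le> n \<and> G \<in> HG {1..n} \<and> hg_connected {1..n} (hg_compl {1..n} G)}
         = {h. fock_primitive h})"
  using primitive_basis[OF assms] cls_omega_independent span_cls_omega_eq_fock_primitives by blast

end
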